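(* In the setting below, for each $N\in\mathbb N$ let $u_N:\Omega\to U$ be measurable with values in $\mathcal D(\psi)$. If $\varepsilon>0$ and $$N\ge \frac{12\,r_{\mathrm{ad}}^2\tau_{\mathrm Df}^2}{\varepsilon^2}\,\mathcal N\big(\varepsilon/(4r_{\mathrm{ad}}\,\mathbb E[L_{\mathrm Df}(\boldsymbol\xi)]);B(\mathcal D(\psi))\big),$$ then $\mathbb E[\Psi(u_N)]\le\mathbb E[\hat\Psi_N(u_N)]+\varepsilon$.
   Context: Let $U$ be a separable Hilbert space (identified with its dual, inner product $(\cdot,\cdot)_U$), $W$ a separable Banach space with dual $W^*$, and $B:U\to W$ a compact linear operator with adjoint $B^*$. Let $\psi:U\to[0,\infty]$ be proper, closed and convex with bounded domain $\mathcal D(\psi)=\{u:\psi(u)<\infty\}$, whose diameter is $r_{\mathrm{ad}}$. Let $U_0\subset U$ be open, convex and bounded with $\mathcal D(\psi)\subset U_0$. Let $\Xi$ be a complete separable metric space, $\boldsymbol\xi$ a $\Xi$-valued random element, and $\boldsymbol\xi^1,\boldsymbol\xi^2,\ldots$ i.i.d. copies of $\boldsymbol\xi$ on a complete probability space $(\Omega,\mathcal F,P)$. Let $f:B(U_0)\times\Xi\to\mathbb R$ be such that $f(\cdot,\xi)$ is continuous on $B(\mathcal D(\psi))$, $f(w,\cdot)$ is measurable, and $|f(Bu,\xi)|\le \zeta_f(\xi)$ on $U_0\times\Xi$ with $\zeta_f$ integrable. Assume: for each $\xi$, $g_\xi(u)=f(Bu,\xi)$ is continuously differentiable on $U_0$;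 there is a Carathéodory map $\mathrm D_wf:B(\mathcal D(\psi))\times\Xi\to W^*$ with $\nabla g_\xi(u)=B^*\mathrm D_wf(Bu,\xi)$ on $\mathcal D(\psi)\times\Xi$; there is an integrable $\zeta_{\mathrm Df}$ with $\|\nabla g_\xi(u)\|_U\le\zeta_{\mathrm Df}(\xi)$ on $U_0\times\Xi$ and $\|\mathrm D_wf(Bu,\xi)\|_{W^*}\le\zeta_{\mathrm Df}(\xi)$ on $\mathcal D(\psi)\times\Xi$. Moreover: there is an integrable $L_{\mathrm Df}:\Xi\to[0,\infty)$ with $\|\nabla g_\xi(u_2)-\nabla g_\xi(u_1)\|_U\le L_{\mathrm Df}(\xi)\|Bu_2-Bu_1\|_W$ for all $u_1,u_2\in\mathcal D(\psi)$, $\xi\in\Xi$; and there is $\tau_{\mathrm Df}>0$ with $\mathbb E[\exp(\tau_{\mathrm Df}^{-2}\|\nabla g_{\boldsymbol\xi}(u)-\mathbb E[\nabla g_{\boldsymbol\xi}(u)]\|_U^2)]\le e$ for all $u\in\mathcal D(\psi)$. Define $\mathrm DF(w)=\mathbb E[\mathrm D_wf(w,\boldsymbol\xi)]$, $\mathrm D\hat F_N(w)=\frac1N\sum_{i=1}^N\mathrm D_wf(w,\boldsymbol\xi^i)$, and on $\mathcal D(\psi)$ the gap functionals $\Psi(u)=\sup_{v\in\mathcal D(\psi)}[(B^*\mathrm DF(Bu),u-v)_U+\psi(u)-\psi(v)]$ and $\hat\Psi_N(u)=\sup_{v\in\mathcal D(\psi)}[(B^*\mathrm D\hat F_N(Bu),u-v)_U+\psi(u)-\psi(v)]$.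 $\mathcal N(\nu;B(\mathcal D(\psi)))$ is the minimal number of points in a $\nu$-net (in $\|\cdot\|_W$) of $B(\mathcal D(\psi))$. *)

theory Defs
  imports "HOL-Probability.Probability"
begin

definition edom :: "('u \<Rightarrow> ereal) \<Rightarrow> 'u set" where
  "edom \<psi> = {u. \<psi> u < \<infinity>}"

definition proper_closed_convex :: "('u::real_normed_vector \<Rightarrow> ereal) \<Rightarrow> bool" where
  "proper_closed_convex \<psi> \<longleftrightarrow>
     edom \<psi> \<noteq> {} \<and> (\<forall>u. \<psi> u > -\<infinity>) \<and>
     closed {(u, t::real). \<psi> u \<le> ereal t} \<and>
     convex {(u, t::real). \<psi> u \<le> ereal t}"

definition compact_operator :: "('u::real_normed_vector \<Rightarrow> 'w::real_normed_vector) \<Rightarrow> bool" where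
  "compact_operator B \<longleftrightarrow> bounded_linear B \<and> compact (closure (B ` cball 0 1))"

definition adj :: "('u::real_inner \<Rightarrow> 'w::real_normed_vector) \<Rightarrow> ('w \<Rightarrow>\<^sub>L real) \<Rightarrow> 'u" where
  "adj B \<phi> = (THE z. \<forall>x. inner z x = blinfun_apply \<phi> (B x))"

definition covering_number :: "ereal \<Rightarrow> 'w::metric_space set \<Rightarrow> nat" where
  "covering_number \<nu> S = (LEAST n. \<exists>C. finite C \<and> C \<subseteq> S \<and> card C = n \<and>
                                      (\<forall>s\<in>S. \<exists>c\<in>C. ereal (dist s c) \<le> \<nu>))"

text \<open>DF(w) = E[D_w f(w,\<xi>)], the expectation taken (weakly) in W*.\<close>
definition DF :: "'a measure \<Rightarrow> ('a \<Rightarrow> 'x) \<Rightarrow> ('w::real_normed_vector \<Rightarrow> 'x \<Rightarrow> ('w \<Rightarrow>\<^sub>L real))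
                   \<Rightarrow> 'w \<Rightarrow> ('w \<Rightarrow>\<^sub>L real)" where
  "DF M \<xi> Dwf w = Blinfun (\<lambda>y. integral\<^sup>L M (\<lambda>\<omega>. blinfun_apply (Dwf w (\<xi> \<omega>)) y))"

definition DFhat :: "(nat \<Rightarrow> 'a \<Rightarrow> 'x) \<Rightarrow> ('w::real_normed_vector \<Rightarrow> 'x \<Rightarrow> ('w \<Rightarrow>\<^sub>L real))
                   \<Rightarrow> nat \<Rightarrow> 'a \<Rightarrow> 'w \<Rightarrow> ('w \<Rightarrow>\<^sub>L real)" where
  "DFhat Xs Dwf N \<omega> w = (1 / real N) *\<^sub>R (\<Sum>i\<in>{1..N}. Dwf w (Xs i \<omega>))"

definition gap :: "('u::real_inner \<Rightarrow> ereal) \<Rightarrow> ('u \<Rightarrow> 'w::real_normed_vector) \<Rightarrow> ('w \<Rightarrow>\<^sub>L real) \<Rightarrow> 'u \<Rightarrow> real" where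
  "gap \<psi> B G u = (SUP v\<in>edom \<psi>. inner (adj B G) (u - v) + real_of_ereal (\<psi> u) - real_of_ereal (\<psi> v))"

end

theory Submission
  imports Defs
begin

(*
  The gap functional is Lipschitz in the gradient with constant r_ad, so it suffices to bound the
  expected uniform error E sup_u |grad F(u) - grad F_N(u)| over dom psi.  Since B is compact,
  B(dom psi) has a finite nu-net with nu = eps / (4 r_ad E[L]).  At each of its K points the sample
  mean has mean-square error at most tau^2 / N (independence, and the sub-Gaussian bound controls
  the variance), so the expected maximal error over the net is at most sqrt (K tau^2 / N), which the
  choice of N makes at most eps / (2 r_ad).  Passing from a net point to an arbitrary u costs at most
  (E[L] + (1/N) sum_i L(xi_i)) nu by the Lipschitz condition, whose expectation is again
  eps / (2 r_ad).  The adjoint B* is obtained from the Riesz representation theorem, proved via a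
  norm-attaining element of the unit ball.
*)

section \<open>Riesz representation and the adjoint\<close>

lemma real_eq_0_if_linear_le_quadratic:
  fixes a b :: real
  assumes "\<And>t. t * a \<le> t\<^sup>2 * b"
  shows "a = 0"
proof -
  define d where "d = \<bar>b\<bar> + 1"
  have d: "d > 0" by (simp add: d_def add_nonneg_pos)
  have "(a / d) * a * d\<^sup>2 \<le> (a / d)\<^sup>2 * b * d\<^sup>2"
    using assms[of "a / d"] by (intro mult_right_mono) auto
  then have "a\<^sup>2 * d \<le> a\<^sup>2 * b"
    using d by (simp add: power2_eq_square field_simps)
  moreover have "a\<^sup>2 * b \<le> a\<^sup>2 * \<bar>b\<bar>" by (simp add: mult_left_mono)
  ultimately have "a\<^sup>2 * d \<le> a\<^sup>2 * \<bar>b\<bar>" by linarith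
  then show ?thesis by (simp add: d_def distrib_left)
qed

lemma sq_ge_of_gt_two_minus:
  fixes s e :: real
  assumes "0 \<le> s" "0 \<le> e" "2 - e < s"
  shows "4 - 4 * e \<le> s\<^sup>2"
proof (cases "e \<le> 2")
  case True
  then have "(2 - e)\<^sup>2 \<le> s\<^sup>2" using assms by (intro power_mono) auto
  moreover have "(2 - e)\<^sup>2 = 4 - 4 * e + e\<^sup>2" by (simp add: power2_diff)
  ultimately show ?thesis using zero_le_power2[of e] by linarith
next
  case False
  then show ?thesis using zero_le_power2[of s] by linarith
qed

lemma Cauchy_of_near_maximisers:
  fixes \<phi> :: "'u::real_inner \<Rightarrow> real"
  assumes "linear \<phi>" "c > 0" "\<And>y. \<phi> y \<le> c * norm y"
    and xs: "\<And>n. norm (xs n) \<le> 1" "\<And>n. c - d n < \<phi> (xs n)"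
    and d: "d \<longlonglongrightarrow> 0" "\<And>n. 0 \<le> d n"
  shows "Cauchy xs"
proof (rule metric_CauchyI)
  \<comment> \<open>parallelogram law: near-maximisers of \<phi> on the unit ball are close to each other\<close>
  have close: "(norm (xs m - xs n))\<^sup>2 \<le> 4 * (d m + d n) / c" for m n
  proof -
    have "2 - (d m + d n) / c < norm (xs m + xs n)"
      using xs(2)[of m] xs(2)[of n] assms(3)[of "xs m + xs n"] \<open>c > 0\<close>
      by (simp add: linear_add[OF assms(1)] field_simps)
    then have "4 - 4 * ((d m + d n) / c) \<le> (norm (xs m + xs n))\<^sup>2"
      using \<open>c > 0\<close> d(2) by (intro sq_ge_of_gt_two_minus) auto
    moreover have "(norm (xs m - xs n))\<^sup>2 + (norm (xs m + xs n))\<^sup>2 = 2 * (norm (xs m))\<^sup>2 + 2 * (norm (xs n))\<^sup>2"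
      by (simp add: power2_norm_eq_inner algebra_simps inner_commute)
    moreover have "(norm (xs m))\<^sup>2 \<le> 1" "(norm (xs n))\<^sup>2 \<le> 1"
      using xs(1) by (simp_all add: power_le_one)
    ultimately show ?thesis by simp
  qed
  fix e :: real assume "e > 0"
  then have "\<forall>\<^sub>F n in sequentially. d n < c * e\<^sup>2 / 8"
    using \<open>c > 0\<close> by (intro order_tendstoD(2)[OF d(1)]) auto
  then obtain M where M: "\<And>n. n \<ge> M \<Longrightarrow> d n < c * e\<^sup>2 / 8"
    unfolding eventually_sequentially by blast
  have "dist (xs m) (xs n) < e" if "m \<ge> M" "n \<ge> M" for m n
  proof -
    have "(dist (xs m) (xs n))\<^sup>2 \<le> 4 * (d m + d n) / c" unfolding dist_norm by (rule close)
    also have "\<dots> < e\<^sup>2" using M[OF that(1)] M[OF that(2)] \<open>c > 0\<close> by (simp add: field_simps)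
    finally show ?thesis using \<open>e > 0\<close> by (simp add: power_less_imp_less_base)
  qed
  then show "\<exists>M. \<forall>m\<ge>M. \<forall>n\<ge>M. dist (xs m) (xs n) < e" by blast
qed

lemma bounded_linear_attains_sup_on_cball:
  fixes \<phi> :: "'u::{real_inner,banach} \<Rightarrow> real"
  assumes "bounded_linear \<phi>"
  shows "\<exists>x. norm x \<le> 1 \<and> (\<forall>y. norm y \<le> 1 \<longrightarrow> \<phi> y \<le> \<phi> x)"
proof -
  interpret bounded_linear \<phi> by fact
  obtain K where K: "\<And>x. norm (\<phi> x) \<le> norm x * K" and "K > 0" using pos_bounded by blast
  define c where "c = Sup (\<phi> ` cball 0 1)"
  have bdd: "bdd_above (\<phi> ` cball 0 1)"
  proof (rule bdd_aboveI2)
    fix x :: 'u assume "x \<in> cball 0 1"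
    then have "norm x * K \<le> 1 * K" using \<open>K > 0\<close> by (intro mult_right_mono) auto
    then show "\<phi> x \<le> K" using K[of x] by (auto simp: abs_le_iff)
  qed
  have le_c: "\<phi> y \<le> c" if "norm y \<le> 1" for y
    unfolding c_def using that bdd by (intro cSup_upper) auto
  have le_c_norm: "\<phi> y \<le> c * norm y" for y
  proof (cases "y = 0")
    case False
    then have "\<phi> (y /\<^sub>R norm y) \<le> c" by (intro le_c) simp
    then show ?thesis using False by (simp add: scaleR field_simps)
  qed simp
  have "0 \<le> c" using le_c[of 0] by simp
  then consider "c = 0" | "c > 0" by linarith
  then show ?thesis
  proof cases
    case 1
    then show ?thesis using le_c by (intro exI[of _ 0]) auto
  next
    case 2
    define d :: "nat \<Rightarrow> real" where "d n = 1 / Suc n" for n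
    have d_lim: "d \<longlonglongrightarrow> 0" unfolding d_def by (rule LIMSEQ_Suc[OF lim_const_over_n])
    have "\<exists>x. norm x \<le> 1 \<and> c - d n < \<phi> x" for n
    proof -
      have "c - d n < c" by (simp add: d_def)
      then show ?thesis unfolding c_def using bdd by (subst (asm) less_cSup_iff) auto
    qed
    then obtain xs where xs_ball: "\<And>n. norm (xs n) \<le> 1" and xs_gt: "\<And>n. c - d n < \<phi> (xs n)"
      by metis
    have "Cauchy xs"
      using linear_axioms 2 le_c_norm xs_ball xs_gt d_lim by (rule Cauchy_of_near_maximisers) (simp add: d_def)
    then obtain x where lim: "xs \<longlonglongrightarrow> x" using Cauchy_convergent_iff convergent_def by blast
    have "norm x \<le> 1" using Lim_bounded[OF tendsto_norm[OF lim]] xs_ball by blast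
    moreover have "c \<le> \<phi> x"
    proof (rule LIMSEQ_le[OF _ tendsto[OF lim]])
      show "(\<lambda>n. c - d n) \<longlonglongrightarrow> c" using tendsto_diff[OF tendsto_const d_lim] by simp
      show "\<exists>N. \<forall>n\<ge>N. c - d n \<le> \<phi> (xs n)" using xs_gt less_imp_le by blast
    qed
    ultimately show ?thesis using le_c by force
  qed
qed

theorem riesz_representation:
  fixes \<phi> :: "'u::{real_inner,banach} \<Rightarrow> real"
  assumes "bounded_linear \<phi>"
  shows "\<exists>z. \<forall>x. inner z x = \<phi> x"
proof -
  interpret bounded_linear \<phi> by fact
  obtain x0 where x0: "norm x0 \<le> 1" and max: "\<And>y. norm y \<le> 1 \<Longrightarrow> \<phi> y \<le> \<phi> x0"
    using bounded_linear_attains_sup_on_cball[OF assms] by blast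
  define c where "c = \<phi> x0"
  have le_c_norm: "\<phi> y \<le> c * norm y" for y
  proof (cases "y = 0")
    case False
    then have "\<phi> (y /\<^sub>R norm y) \<le> c" unfolding c_def by (intro max) simp
    then show ?thesis using False by (simp add: scaleR field_simps)
  qed simp
  have "0 \<le> c" using max[of 0] by (simp add: c_def)
  then consider "c = 0" | "c > 0" by linarith
  then show ?thesis
  proof cases
    case 1
    have "\<phi> x = 0" for x using le_c_norm[of x] le_c_norm[of "- x"] 1 by (simp add: neg)
    then show ?thesis by (intro exI[of _ 0]) simp
  next
    case 2
    have "norm x0 = 1" using le_c_norm[of x0] x0 2 by (simp add: c_def)
    have "\<phi> y = c * inner x0 y" for y
    proof -
      define y' where "y' = y - inner x0 y *\<^sub>R x0"
      have orth: "orthogonal x0 (t *\<^sub>R y')" for t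
        using \<open>norm x0 = 1\<close> by (simp add: y'_def orthogonal_def inner_diff_right power2_norm_eq_inner[symmetric])
      \<comment> \<open>x0 maximises \<phi> on the unit sphere, so \<phi> vanishes on the orthogonal complement of x0\<close>
      have "t * \<phi> y' \<le> t\<^sup>2 * (c * (norm y')\<^sup>2 / 2)" for t
      proof -
        have "(norm (x0 + t *\<^sub>R y'))\<^sup>2 = 1 + t\<^sup>2 * (norm y')\<^sup>2"
          using norm_add_Pythagorean[OF orth] \<open>norm x0 = 1\<close> by (simp add: power_mult_distrib)
        also have "\<dots> \<le> (1 + t\<^sup>2 * (norm y')\<^sup>2 / 2)\<^sup>2"
          using zero_le_power2[of "t\<^sup>2 * (norm y')\<^sup>2"] by (simp add: power2_eq_square field_simps)
        finally have "norm (x0 + t *\<^sub>R y') \<le> 1 + t\<^sup>2 * (norm y')\<^sup>2 / 2"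
          by (rule power2_le_imp_le) simp
        then have "c * norm (x0 + t *\<^sub>R y') \<le> c * (1 + t\<^sup>2 * (norm y')\<^sup>2 / 2)"
          using 2 by (intro mult_left_mono) auto
        moreover have "c + t * \<phi> y' = \<phi> (x0 + t *\<^sub>R y')" by (simp add: c_def add scaleR)
        ultimately show ?thesis using le_c_norm[of "x0 + t *\<^sub>R y'"] by (simp add: algebra_simps)
      qed
      then have "\<phi> y' = 0" by (rule real_eq_0_if_linear_le_quadratic)
      then show ?thesis by (simp add: y'_def diff scaleR c_def)
    qed
    then show ?thesis by (intro exI[of _ "c *\<^sub>R x0"]) simp
  qed
qed

lemma adj_inner:
  fixes B :: "'u::{real_inner,banach} \<Rightarrow> 'w::real_normed_vector"
  assumes "bounded_linear B"
  shows "inner (adj B \<phi>) x = blinfun_apply \<phi> (B x)"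
proof -
  obtain z where z: "\<And>x. inner z x = blinfun_apply \<phi> (B x)"
    using riesz_representation[OF bounded_linear_compose[OF blinfun.bounded_linear_right assms]] by blast
  have "adj B \<phi> = z"
    unfolding adj_def by (rule the_equality) (use z vector_eq_rdot in metis)+
  then show ?thesis using z by simp
qed

lemma bounded_linear_adj:
  fixes B :: "'u::{real_inner,banach} \<Rightarrow> 'w::real_normed_vector"
  assumes "bounded_linear B"
  shows "bounded_linear (adj B)"
proof -
  interpret B: bounded_linear B by fact
  obtain K where K: "\<And>x. norm (B x) \<le> norm x * K" and "K > 0" using B.pos_bounded by blast
  show ?thesis
  proof (rule bounded_linear_intro[where K=K])
    fix \<phi> \<theta> show "adj B (\<phi> + \<theta>) = adj B \<phi> + adj B \<theta>"
      by (rule vector_eq_rdot[THEN iffD1]) (simp add: adj_inner[OF assms] inner_add_left blinfun.add_left)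
  next
    fix r \<phi> show "adj B (r *\<^sub>R \<phi>) = r *\<^sub>R adj B \<phi>"
      by (rule vector_eq_rdot[THEN iffD1]) (simp add: adj_inner[OF assms] blinfun.scaleR_left)
  next
    fix \<phi> :: "'w \<Rightarrow>\<^sub>L real"
    let ?z = "adj B \<phi>"
    have "norm ?z * norm ?z = \<phi> (B ?z)"
      using power2_norm_eq_inner[of ?z] adj_inner[OF assms, of \<phi> ?z] by (simp add: power2_eq_square)
    also have "\<dots> \<le> norm \<phi> * norm (B ?z)" using norm_blinfun[of \<phi> "B ?z"] by simp
    also have "\<dots> \<le> norm ?z * (norm \<phi> * K)"
      using K[of ?z] by (simp add: mult_left_mono mult.left_commute)
    finally show "norm ?z \<le> norm \<phi> * K"
      using \<open>K > 0\<close> by (cases "?z = 0") (auto simp: mult_le_cancel_left)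
  qed
qed

lemma blinfun_apply_DF:
  assumes "\<xi> \<in> M \<rightarrow>\<^sub>M borel" "(\<lambda>x. Dwf w x) \<in> borel_measurable borel"
    and "\<And>x. norm (Dwf w x) \<le> \<zeta> x" "integrable M (\<lambda>\<omega>. \<zeta> (\<xi> \<omega>))"
  shows "blinfun_apply (DF M \<xi> Dwf w) y = integral\<^sup>L M (\<lambda>\<omega>. blinfun_apply (Dwf w (\<xi> \<omega>)) y)"
proof -
  have bound: "norm (blinfun_apply (Dwf w x) y) \<le> \<zeta> x * norm y" for x y
    using norm_blinfun[of "Dwf w x" y] mult_right_mono[OF assms(3)[of x] norm_ge_zero[of y]] by linarith
  have int: "integrable M (\<lambda>\<omega>. blinfun_apply (Dwf w (\<xi> \<omega>)) y)" for y
  proof (rule Bochner_Integration.integrable_bound[OF integrable_mult_left[OF assms(4), of "norm y"]])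
    have "(\<lambda>x. blinfun_apply (Dwf w x) y) \<in> borel_measurable borel"
      by (rule measurable_compose[OF assms(2) borel_measurable_continuous_onI[OF
            linear_continuous_on[OF blinfun.bounded_linear_left]]])
    then show "(\<lambda>\<omega>. blinfun_apply (Dwf w (\<xi> \<omega>)) y) \<in> borel_measurable M"
      by (rule measurable_compose[OF assms(1)])
    show "AE \<omega> in M. norm (blinfun_apply (Dwf w (\<xi> \<omega>)) y) \<le> norm (\<zeta> (\<xi> \<omega>) * norm y)"
      using bound by (auto intro!: AE_I2 order_trans[OF _ abs_ge_self])
  qed
  have "bounded_linear (\<lambda>y. integral\<^sup>L M (\<lambda>\<omega>. blinfun_apply (Dwf w (\<xi> \<omega>)) y))"
  proof (rule bounded_linear_intro[where K="integral\<^sup>L M (\<lambda>\<omega>. \<zeta> (\<xi> \<omega>))"])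
    show "integral\<^sup>L M (\<lambda>\<omega>. blinfun_apply (Dwf w (\<xi> \<omega>)) (y + z)) =
      integral\<^sup>L M (\<lambda>\<omega>. blinfun_apply (Dwf w (\<xi> \<omega>)) y) + integral\<^sup>L M (\<lambda>\<omega>. blinfun_apply (Dwf w (\<xi> \<omega>)) z)" for y z
      using int[of y] int[of z] by (simp add: blinfun.add_right)
    show "integral\<^sup>L M (\<lambda>\<omega>. blinfun_apply (Dwf w (\<xi> \<omega>)) (r *\<^sub>R y)) =
      r *\<^sub>R integral\<^sup>L M (\<lambda>\<omega>. blinfun_apply (Dwf w (\<xi> \<omega>)) y)" for r y
      by (simp add: blinfun.scaleR_right)
    show "norm (integral\<^sup>L M (\<lambda>\<omega>. blinfun_apply (Dwf w (\<xi> \<omega>)) y)) \<le> norm y * integral\<^sup>L M (\<lambda>\<omega>. \<zeta> (\<xi> \<omega>))" for y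
    proof -
      have "norm (integral\<^sup>L M (\<lambda>\<omega>. blinfun_apply (Dwf w (\<xi> \<omega>)) y))
          \<le> integral\<^sup>L M (\<lambda>\<omega>. norm (blinfun_apply (Dwf w (\<xi> \<omega>)) y))" by (rule integral_norm_bound)
      also have "\<dots> \<le> integral\<^sup>L M (\<lambda>\<omega>. \<zeta> (\<xi> \<omega>) * norm y)"
        using int[of y] assms(4) bound by (intro integral_mono) auto
      finally show ?thesis by (simp add: mult.commute)
    qed
  qed
  then show ?thesis unfolding DF_def by (subst bounded_linear_Blinfun_apply) auto
qed

lemma adj_DF:
  fixes B :: "'u::{real_inner, banach, second_countable_topology} \<Rightarrow> 'w::real_normed_vector"
  assumes B: "bounded_linear B"
    and \<xi>: "\<xi> \<in> M \<rightarrow>\<^sub>M borel" and Dwf: "(\<lambda>x. Dwf w x) \<in> borel_measurable borel"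
    and \<zeta>: "\<And>x. norm (Dwf w x) \<le> \<zeta> x" "integrable M (\<lambda>\<omega>. \<zeta> (\<xi> \<omega>))"
  shows "(\<lambda>x. adj B (Dwf w x)) \<in> borel_measurable borel"
    and "integrable M (\<lambda>\<omega>. adj B (Dwf w (\<xi> \<omega>)))"
    and "adj B (DF M \<xi> Dwf w) = integral\<^sup>L M (\<lambda>\<omega>. adj B (Dwf w (\<xi> \<omega>)))"
proof -
  interpret adj: bounded_linear "adj B" by (rule bounded_linear_adj[OF B])
  obtain K where K: "\<And>\<phi>. norm (adj B \<phi>) \<le> norm \<phi> * K" and "K > 0" using adj.pos_bounded by blast
  have bound: "norm (adj B (Dwf w x)) \<le> norm (\<zeta> x * K)" for x
  proof -
    have "norm (Dwf w x) * K \<le> \<bar>\<zeta> x\<bar> * K"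
      using \<zeta>(1)[of x] \<open>K > 0\<close> by (intro mult_right_mono) auto
    then show ?thesis using order_trans[OF K[of "Dwf w x"]] \<open>K > 0\<close> by (simp add: abs_mult)
  qed
  show meas: "(\<lambda>x. adj B (Dwf w x)) \<in> borel_measurable borel"
    by (rule measurable_compose[OF Dwf borel_measurable_continuous_onI[OF linear_continuous_on]])
      (rule bounded_linear_adj[OF B])
  then show int: "integrable M (\<lambda>\<omega>. adj B (Dwf w (\<xi> \<omega>)))"
    by (rule Bochner_Integration.integrable_bound[OF integrable_mult_left[OF \<zeta>(2), of K] measurable_compose[OF \<xi>]])
       (use bound in simp)
  show "adj B (DF M \<xi> Dwf w) = integral\<^sup>L M (\<lambda>\<omega>. adj B (Dwf w (\<xi> \<omega>)))"
  proof (rule vector_eq_rdot[THEN iffD1, rule_format])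
    fix x
    have "inner (adj B (DF M \<xi> Dwf w)) x = integral\<^sup>L M (\<lambda>\<omega>. blinfun_apply (Dwf w (\<xi> \<omega>)) (B x))"
      by (simp add: adj_inner[OF B] blinfun_apply_DF[where Dwf=Dwf and w=w, OF \<xi> Dwf \<zeta>])
    also have "\<dots> = inner (integral\<^sup>L M (\<lambda>\<omega>. adj B (Dwf w (\<xi> \<omega>)))) x"
      using int by (simp flip: adj_inner[OF B])
    finally show "inner (adj B (DF M \<xi> Dwf w)) x = inner (integral\<^sup>L M (\<lambda>\<omega>. adj B (Dwf w (\<xi> \<omega>)))) x" .
  qed
qed

lemma adj_DFhat:
  fixes B :: "'u::{real_inner, banach} \<Rightarrow> 'w::real_normed_vector"
  assumes "bounded_linear B"
  shows "adj B (DFhat Xs Dwf N \<omega> w) = (1 / N) *\<^sub>R (\<Sum>i=1..N. adj B (Dwf w (Xs i \<omega>)))"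
proof -
  interpret adj: bounded_linear "adj B" by (rule bounded_linear_adj[OF assms])
  show ?thesis by (simp add: DFhat_def adj.scaleR adj.sum)
qed

section \<open>The gap functional\<close>

lemma cSUP_add_const:
  fixes f :: "'a \<Rightarrow> real"
  assumes "A \<noteq> {}" "bdd_above (f ` A)"
  shows "(SUP x\<in>A. c + f x) = c + (SUP x\<in>A. f x)"
  using continuous_at_Sup_mono[of "\<lambda>x. c + x" "f ` A"] assms
  by (simp add: mono_def image_image continuous_intros)

definition fenchel_conj :: "('u::real_inner \<Rightarrow> ereal) \<Rightarrow> 'u \<Rightarrow> real" where
  "fenchel_conj \<psi> q = (SUP v\<in>edom \<psi>. inner q v - real_of_ereal (\<psi> v))"

lemma fenchel_conj_upper:
  fixes \<psi> :: "'u::real_inner \<Rightarrow> ereal"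
  assumes "bounded (edom \<psi>)" "\<And>u. \<psi> u \<ge> 0" "v \<in> edom \<psi>"
  shows "inner q v - real_of_ereal (\<psi> v) \<le> fenchel_conj \<psi> q"
proof -
  obtain R where R: "\<And>v. v \<in> edom \<psi> \<Longrightarrow> norm v \<le> R" using assms(1) by (auto simp: bounded_iff)
  have "inner q v - real_of_ereal (\<psi> v) \<le> norm q * R" if "v \<in> edom \<psi>" for v
    using norm_cauchy_schwarz[of q v] mult_left_mono[OF R[OF that], of "norm q"]
      real_of_ereal_pos[OF assms(2)[of v]] by simp
  then show ?thesis unfolding fenchel_conj_def by (intro cSUP_upper assms(3) bdd_aboveI2)
qed

lemma gap_eq_fenchel_conj:
  fixes \<psi> :: "'u::real_inner \<Rightarrow> ereal"
  assumes "bounded (edom \<psi>)" "\<And>u. \<psi> u \<ge> 0" "edom \<psi> \<noteq> {}"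
  shows "gap \<psi> B G u = inner (adj B G) u + real_of_ereal (\<psi> u) + fenchel_conj \<psi> (- adj B G)"
proof -
  let ?c = "inner (adj B G) u + real_of_ereal (\<psi> u)"
  have "bdd_above ((\<lambda>v. inner (- adj B G) v - real_of_ereal (\<psi> v)) ` edom \<psi>)"
    using fenchel_conj_upper[OF assms(1,2)] unfolding fenchel_conj_def by (rule bdd_aboveI2)
  then have "(SUP v\<in>edom \<psi>. ?c + (inner (- adj B G) v - real_of_ereal (\<psi> v))) = ?c + fenchel_conj \<psi> (- adj B G)"
    unfolding fenchel_conj_def by (rule cSUP_add_const[OF assms(3)])
  moreover have "gap \<psi> B G u = (SUP v\<in>edom \<psi>. ?c + (inner (- adj B G) v - real_of_ereal (\<psi> v)))"
    unfolding gap_def by (intro SUP_cong refl) (simp add: inner_diff_right)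
  ultimately show ?thesis by simp
qed

lemma continuous_on_fenchel_conj:
  fixes \<psi> :: "'u::real_inner \<Rightarrow> ereal"
  assumes "bounded (edom \<psi>)" "\<And>u. \<psi> u \<ge> 0" "edom \<psi> \<noteq> {}"
  shows "continuous_on UNIV (fenchel_conj \<psi>)"
proof -
  obtain R where "R > 0" and R: "\<And>v. v \<in> edom \<psi> \<Longrightarrow> norm v \<le> R"
    using assms(1) by (auto simp: bounded_pos)
  have one_sided: "fenchel_conj \<psi> p \<le> fenchel_conj \<psi> q + R * norm (p - q)" for p q
    unfolding fenchel_conj_def[of \<psi> p]
  proof (rule cSUP_least[OF assms(3)])
    fix v assume v: "v \<in> edom \<psi>"
    have "inner (p - q) v \<le> R * norm (p - q)"
      using norm_cauchy_schwarz[of "p - q" v] mult_left_mono[OF R[OF v], of "norm (p - q)"]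
      by (simp add: mult.commute)
    then show "inner p v - real_of_ereal (\<psi> v) \<le> fenchel_conj \<psi> q + R * norm (p - q)"
      using fenchel_conj_upper[OF assms(1,2) v, of q] by (simp add: inner_diff_left)
  qed
  have "R-lipschitz_on UNIV (fenchel_conj \<psi>)"
  proof (rule lipschitz_onI)
    fix p q :: 'u
    show "dist (fenchel_conj \<psi> p) (fenchel_conj \<psi> q) \<le> R * dist p q"
      using one_sided[of p q] one_sided[of q p]
      by (simp add: dist_real_def dist_norm norm_minus_commute abs_le_iff)
  qed (use \<open>R > 0\<close> in simp)
  then show ?thesis by (rule lipschitz_on_continuous_on)
qed

lemma gap_nonneg:
  fixes \<psi> :: "'u::real_inner \<Rightarrow> ereal"
  assumes "bounded (edom \<psi>)" "\<And>u. \<psi> u \<ge> 0" "u \<in> edom \<psi>"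
  shows "0 \<le> gap \<psi> B G u"
proof -
  have "edom \<psi> \<noteq> {}" using assms(3) by auto
  then show ?thesis
    using fenchel_conj_upper[OF assms, of "- adj B G"] by (simp add: gap_eq_fenchel_conj[OF assms(1,2)])
qed

lemma gap_le_gap_add:
  fixes \<psi> :: "'u::real_inner \<Rightarrow> ereal"
  assumes "bounded (edom \<psi>)" "\<And>u. \<psi> u \<ge> 0" "u \<in> edom \<psi>"
  shows "gap \<psi> B G u \<le> gap \<psi> B H u + diameter (edom \<psi>) * norm (adj B G - adj B H)"
proof -
  define p1 p2 where "p1 = adj B G" and "p2 = adj B H"
  let ?d = "diameter (edom \<psi>) * norm (p1 - p2)"
  have ne: "edom \<psi> \<noteq> {}" using assms(3) by auto
  have "fenchel_conj \<psi> (- p1) \<le> fenchel_conj \<psi> (- p2) + inner (p2 - p1) u + ?d"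
    unfolding fenchel_conj_def[of \<psi> "- p1"]
  proof (rule cSUP_least[OF ne])
    fix v assume v: "v \<in> edom \<psi>"
    have "inner (p1 - p2) (u - v) \<le> norm (p1 - p2) * norm (u - v)" by (rule norm_cauchy_schwarz)
    also have "\<dots> \<le> ?d"
      using mult_left_mono[OF diameter_bounded_bound[OF assms(1,3) v], of "norm (p1 - p2)"]
      by (simp add: dist_norm mult.commute)
    finally show "inner (- p1) v - real_of_ereal (\<psi> v) \<le> fenchel_conj \<psi> (- p2) + inner (p2 - p1) u + ?d"
      using fenchel_conj_upper[OF assms(1,2) v, of "- p2"] by (simp add: algebra_simps inner_diff_left inner_diff_right)
  qed
  then show ?thesis
    by (simp add: gap_eq_fenchel_conj[OF assms(1,2) ne] p1_def[symmetric] p2_def[symmetric] inner_diff_left)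
qed

lemma abs_gap_diff_le:
  fixes \<psi> :: "'u::real_inner \<Rightarrow> ereal"
  assumes "bounded (edom \<psi>)" "\<And>u. \<psi> u \<ge> 0" "u \<in> edom \<psi>"
  shows "\<bar>gap \<psi> B G u - gap \<psi> B H u\<bar> \<le> diameter (edom \<psi>) * norm (adj B G - adj B H)"
  using gap_le_gap_add[OF assms, of B G H] gap_le_gap_add[OF assms, of B H G]
  by (simp add: abs_le_iff norm_minus_commute)

lemma borel_measurable_closed_epigraph:
  fixes \<psi> :: "'u::{real_normed_vector, second_countable_topology} \<Rightarrow> ereal"
  assumes "closed {(u, t::real). \<psi> u \<le> ereal t}" "\<And>u. \<psi> u > -\<infinity>"
  shows "\<psi> \<in> borel_measurable borel"
proof (rule borel_measurableI_le)
  fix y :: ereal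
  show "{u \<in> space borel. \<psi> u \<le> y} \<in> sets borel"
  proof (cases y)
    case (real t)
    have "closed ((\<lambda>u. (u, t)) -` {(u, t::real). \<psi> u \<le> ereal t})"
      by (rule continuous_closed_vimage[OF assms(1)]) (intro continuous_intros)
    then show ?thesis using real by (simp add: vimage_def)
  next
    case MInf
    then show ?thesis using assms(2) by (simp add: not_le)
  qed simp
qed

lemma borel_measurable_gap:
  fixes \<psi> :: "'u::{real_inner, second_countable_topology} \<Rightarrow> ereal"
  assumes "proper_closed_convex \<psi>" "bounded (edom \<psi>)" "\<And>u. \<psi> u \<ge> 0"
    and "(\<lambda>\<omega>. adj B (G \<omega>)) \<in> borel_measurable M" "u \<in> borel_measurable M"
  shows "(\<lambda>\<omega>. gap \<psi> B (G \<omega>) (u \<omega>)) \<in> borel_measurable M"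
proof -
  have ne: "edom \<psi> \<noteq> {}" and [measurable]: "\<psi> \<in> borel_measurable borel"
    using assms(1) borel_measurable_closed_epigraph by (auto simp: proper_closed_convex_def)
  have [measurable]: "fenchel_conj \<psi> \<in> borel_measurable borel"
    by (rule borel_measurable_continuous_onI[OF continuous_on_fenchel_conj[OF assms(2,3) ne]])
  note [measurable] = assms(4,5)
  show ?thesis by (simp add: gap_eq_fenchel_conj[OF assms(2,3) ne])
qed

section \<open>Caratheodory functions and measurable Lipschitz bounds\<close>

lemma borel_measurable_caratheodory:
  fixes F :: "'x \<Rightarrow> 'u::{metric_space, second_countable_topology} \<Rightarrow> 'v::metric_space"
  assumes cont: "\<And>x. continuous_on S (F x)"
    and meas: "\<And>u. u \<in> S \<Longrightarrow> (\<lambda>x. F x u) \<in> borel_measurable N"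
    and X: "X \<in> M \<rightarrow>\<^sub>M N" and U: "U \<in> borel_measurable M" and US: "\<And>\<omega>. U \<omega> \<in> S"
  shows "(\<lambda>\<omega>. F (X \<omega>) (U \<omega>)) \<in> borel_measurable M"
proof (cases "S = {}")
  case False
  obtain D where D: "countable D" "D \<subseteq> S" "S \<subseteq> closure D" by (rule separable)
  then have "D \<noteq> {}" using False by auto
  define e where "e = from_nat_into D"
  have eS: "e k \<in> S" for k unfolding e_def using from_nat_into[OF \<open>D \<noteq> {}\<close>] D(2) by blast
  have e_dense: "\<exists>k. dist (e k) (U \<omega>) < r" if r: "r > 0" for \<omega> r
  proof -
    have "U \<omega> \<in> closure D" using D(3) US by blast
    then obtain d where "d \<in> D" "dist d (U \<omega>) < r"
      using r unfolding closure_approachable by blast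
    then show ?thesis unfolding e_def by (metis D(1) from_nat_into_surj)
  qed
  \<comment> \<open>a measurable choice of dense points converging to U \<omega>\<close>
  define idx where "idx n \<omega> = (LEAST k. dist (e k) (U \<omega>) < 1 / Suc n)" for n \<omega>
  have idx: "dist (e (idx n \<omega>)) (U \<omega>) < 1 / Suc n" for n \<omega>
    unfolding idx_def by (rule LeastI_ex) (simp add: e_dense)
  have [measurable]: "U \<in> borel_measurable M" "idx n \<in> M \<rightarrow>\<^sub>M count_space UNIV" for n
    unfolding idx_def[abs_def] using U by measurable
  have approx_meas: "(\<lambda>\<omega>. F (X \<omega>) (e (idx n \<omega>))) \<in> borel_measurable M" for n
    by (rule measurable_compose_countable'[where f="\<lambda>k \<omega>. F (X \<omega>) (e k)" and I=UNIV])
       (auto intro: measurable_compose[OF X meas[OF eS]])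
  show ?thesis
  proof (rule borel_measurable_LIMSEQ_metric[OF approx_meas])
    fix \<omega>
    have "(\<lambda>n. e (idx n \<omega>)) \<longlonglongrightarrow> U \<omega>"
    proof (rule tendstoI)
      fix r :: real assume "r > 0"
      have "\<forall>\<^sub>F n in sequentially. 1 / real (Suc n) < r"
        using \<open>r > 0\<close> by (intro order_tendstoD(2)[OF LIMSEQ_Suc[OF lim_const_over_n]])
      then show "\<forall>\<^sub>F n in sequentially. dist (e (idx n \<omega>)) (U \<omega>) < r"
        by eventually_elim (use idx less_trans in blast)
    qed
    then show "(\<lambda>n. F (X \<omega>) (e (idx n \<omega>))) \<longlonglongrightarrow> F (X \<omega>) (U \<omega>)"
      using US eS by (intro continuous_on_tendsto_compose[OF cont]) auto
  qed
qed (use US in blast)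

lemma dist_le_mult_dist_extend:
  fixes g :: "'u::metric_space \<Rightarrow> 'v::metric_space" and B :: "'u \<Rightarrow> 'w::metric_space"
  assumes "continuous_on E g" "continuous_on E B" "D \<subseteq> E" "E \<subseteq> closure D"
    and on_D: "\<And>a b. a \<in> D \<Longrightarrow> b \<in> D \<Longrightarrow> dist (g a) (g b) \<le> c * dist (B a) (B b)"
    and u: "u1 \<in> E" "u2 \<in> E"
  shows "dist (g u1) (g u2) \<le> c * dist (B u1) (B u2)"
proof -
  obtain a b where a: "\<And>n. a n \<in> D" "a \<longlonglongrightarrow> u1" and b: "\<And>n. b n \<in> D" "b \<longlonglongrightarrow> u2"
    using assms(4) u closure_sequential by (metis subsetD)
  have lim: "(\<lambda>n. f (s n)) \<longlonglongrightarrow> f u" if "continuous_on E f" "\<And>n. s n \<in> D" "s \<longlonglongrightarrow> u" "u \<in> E"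
    for f :: "'u \<Rightarrow> 'z::topological_space" and s u
    using that assms(3) by (intro continuous_on_tendsto_compose[OF that(1)] always_eventually) auto
  have "(\<lambda>n. c * dist (B (a n)) (B (b n)) - dist (g (a n)) (g (b n)))
      \<longlonglongrightarrow> c * dist (B u1) (B u2) - dist (g u1) (g u2)"
    using a b u by (intro tendsto_intros lim[OF assms(2)] lim[OF assms(1)]) auto
  then have "0 \<le> c * dist (B u1) (B u2) - dist (g u1) (g u2)"
    by (rule LIMSEQ_le_const) (use on_D a(1) b(1) in auto)
  then show ?thesis by simp
qed

lemma obtain_measurable_lipschitz_bound:
  fixes g :: "'x \<Rightarrow> 'u::{metric_space, second_countable_topology} \<Rightarrow> 'v::{metric_space, second_countable_topology}"
    and B :: "'u \<Rightarrow> 'w::metric_space"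
  assumes cont: "\<And>x. continuous_on E (g x)" and B: "continuous_on E B"
    and meas: "\<And>u. u \<in> E \<Longrightarrow> (\<lambda>x. g x u) \<in> borel_measurable N"
    and L_nonneg: "\<And>x. 0 \<le> L x"
    and lip: "\<And>x u1 u2. u1 \<in> E \<Longrightarrow> u2 \<in> E \<Longrightarrow> dist (g x u1) (g x u2) \<le> L x * dist (B u1) (B u2)"
  obtains Ls where "Ls \<in> borel_measurable N" "\<And>x. 0 \<le> Ls x" "\<And>x. Ls x \<le> L x"
    "\<And>x u1 u2. u1 \<in> E \<Longrightarrow> u2 \<in> E \<Longrightarrow> dist (g x u1) (g x u2) \<le> Ls x * dist (B u1) (B u2)"
proof (cases "E = {}")
  case True
  then show ?thesis using that[of "\<lambda>_. 0"] L_nonneg by simp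
next
  case False
  obtain D where D: "countable D" "D \<subseteq> E" "E \<subseteq> closure D" by (rule separable)
  then have "D \<times> D \<noteq> {}" using False by auto
  \<comment> \<open>the best Lipschitz constant on the countable dense set D \<times> D is measurable\<close>
  define q where "q x p = dist (g x (fst p)) (g x (snd p)) / dist (B (fst p)) (B (snd p))" for x p
  define Ls where "Ls x = (SUP p\<in>D \<times> D. q x p)" for x
  have q_le: "q x p \<le> L x" if "p \<in> D \<times> D" for x p
    using lip[of "fst p" "snd p" x] that D(2) L_nonneg[of x]
    by (cases "B (fst p) = B (snd p)") (auto simp: q_def divide_le_eq mult.commute subset_iff)
  then have bdd: "bdd_above ((\<lambda>p. q x p) ` (D \<times> D))" for x by (intro bdd_aboveI2)
  have q_le_Ls: "q x p \<le> Ls x" if "p \<in> D \<times> D" for x p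
    unfolding Ls_def using that bdd by (rule cSUP_upper)
  have Ls_nonneg: "0 \<le> Ls x" for x
    using q_le_Ls[of _ x] \<open>D \<times> D \<noteq> {}\<close> by (force simp: q_def intro: order_trans[OF zero_le_divide_iff[THEN iffD2]])
  have "Ls \<in> borel_measurable N"
    unfolding Ls_def[abs_def] q_def using D(1) D(2) meas bdd[unfolded q_def]
    by (intro borel_measurable_cSUP) (auto intro!: borel_measurable_dist borel_measurable_divide)
  moreover have "Ls x \<le> L x" for x
    unfolding Ls_def using \<open>D \<times> D \<noteq> {}\<close> q_le by (rule cSUP_least)
  moreover have "dist (g x u1) (g x u2) \<le> Ls x * dist (B u1) (B u2)" if "u1 \<in> E" "u2 \<in> E" for x u1 u2
  proof (rule dist_le_mult_dist_extend[OF cont B D(2,3) _ that])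
    fix a b assume "a \<in> D" "b \<in> D"
    then show "dist (g x a) (g x b) \<le> Ls x * dist (B a) (B b)"
      using lip[of a b x] q_le_Ls[of "(a, b)" x] D(2)
      by (cases "B a = B b") (auto simp: q_def divide_le_eq mult.commute)
  qed
  ultimately show ?thesis using that Ls_nonneg by blast
qed

section \<open>Finite nets\<close>

lemma obtain_finite_net:
  fixes S :: "'a::metric_space set"
  assumes "compact T" "S \<subseteq> T" "r > 0"
  obtains C where "finite C" "C \<subseteq> S" "\<And>s. s \<in> S \<Longrightarrow> \<exists>c\<in>C. dist s c \<le> r"
proof -
  have "Met_TC.mtotally_bounded T" using assms(1) by (simp add: Met_TC.compactin_imp_mtotally_bounded)
  then have "Met_TC.mtotally_bounded S" using assms(2) by (rule Met_TC.mtotally_bounded_subset)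
  then obtain C where C: "finite C" "C \<subseteq> S" and cover: "S \<subseteq> (\<Union>c\<in>C. ball c r)"
    using assms(3) unfolding Met_TC.mtotally_bounded_def by auto
  have "\<exists>c\<in>C. dist s c \<le> r" if s: "s \<in> S" for s
  proof -
    obtain c where "c \<in> C" "dist c s < r" using cover s by auto
    then show ?thesis by (metis dist_commute less_imp_le)
  qed
  with C show ?thesis using that by blast
qed

lemma compact_operator_image_subset_compact:
  fixes B :: "'u::real_normed_vector \<Rightarrow> 'w::real_normed_vector"
  assumes "compact_operator B" "bounded E"
  obtains T where "compact T" "B ` E \<subseteq> T"
proof -
  interpret bounded_linear B using assms(1) by (simp add: compact_operator_def)
  obtain R where "R > 0" and R: "\<And>u. u \<in> E \<Longrightarrow> norm u \<le> R" using assms(2) by (auto simp: bounded_pos)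
  have "B u \<in> (\<lambda>y. R *\<^sub>R y) ` closure (B ` cball 0 1)" if "u \<in> E" for u
  proof
    show "B u = R *\<^sub>R B (u /\<^sub>R R)" using \<open>R > 0\<close> by (simp add: scaleR)
    show "B (u /\<^sub>R R) \<in> closure (B ` cball 0 1)"
    proof -
      have "norm (u /\<^sub>R R) \<le> 1" using R[OF that] \<open>R > 0\<close> by (simp add: field_simps)
      then show ?thesis using closure_subset by fastforce
    qed
  qed
  moreover have "compact ((\<lambda>y. R *\<^sub>R y) ` closure (B ` cball 0 1))"
    using assms(1) by (intro compact_scaling) (simp add: compact_operator_def)
  ultimately show ?thesis using that by blast
qed

lemma obtain_minimal_net:
  fixes S :: "'a::metric_space set"
  assumes "compact T" "S \<subseteq> T" "S \<noteq> {}" "\<rho> > 0"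
  obtains C where "finite C" "C \<subseteq> S" "card C = covering_number \<rho> S"
    "\<And>s. s \<in> S \<Longrightarrow> \<exists>c\<in>C. ereal (dist s c) \<le> \<rho>"
proof -
  have net: "\<exists>C. finite C \<and> C \<subseteq> S \<and> (\<forall>s\<in>S. \<exists>c\<in>C. ereal (dist s c) \<le> \<rho>)"
  proof (cases \<rho>)
    case (real r)
    then have "r > 0" using assms(4) by simp
    then obtain C where "finite C" "C \<subseteq> S" "\<And>s. s \<in> S \<Longrightarrow> \<exists>c\<in>C. dist s c \<le> r"
      using obtain_finite_net[OF assms(1,2)] by blast
    then show ?thesis using real by auto
  next
    case PInf
    obtain s0 where "s0 \<in> S" using assms(3) by blast
    then show ?thesis using PInf by (intro exI[of _ "{s0}"]) auto
  qed (use assms(4) in simp)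
  have "\<exists>C. finite C \<and> C \<subseteq> S \<and> card C = covering_number \<rho> S \<and> (\<forall>s\<in>S. \<exists>c\<in>C. ereal (dist s c) \<le> \<rho>)"
    unfolding covering_number_def by (rule LeastI_ex) (use net in blast)
  then show ?thesis using that by blast
qed

lemma obtain_minimal_net_radius:
  fixes S :: "'a::metric_space set"
  assumes "compact T" "S \<subseteq> T" "S \<noteq> {}" "a > 0" "b \<ge> 0"
  obtains C r where "finite C" "C \<subseteq> S" "card C = covering_number (ereal a / ereal b) S"
    "\<And>s. s \<in> S \<Longrightarrow> \<exists>c\<in>C. dist s c \<le> r" "b > 0 \<Longrightarrow> r = a / b"
proof -
  have "ereal a / ereal b > 0" using assms(4,5) by (cases "b = 0") auto
  then obtain C where C: "finite C" "C \<subseteq> S" "card C = covering_number (ereal a / ereal b) S"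
    and net: "\<And>s. s \<in> S \<Longrightarrow> \<exists>c\<in>C. ereal (dist s c) \<le> ereal a / ereal b"
    using obtain_minimal_net[OF assms(1-3)] by blast
  show ?thesis
  proof (cases "b > 0")
    case True
    then show ?thesis using that[OF C, of "a / b"] net by auto
  next
    case False
    \<comment> \<open>in ereal, a / 0 is infinite for a > 0, so any bound on the distances in S will do\<close>
    have "bounded S" using assms(1,2) compact_imp_bounded bounded_subset by blast
    then have "\<exists>c\<in>C. dist s c \<le> diameter S" if "s \<in> S" for s
      using net[OF that] C(2) that by (meson diameter_bounded_bound subsetD)
    then show ?thesis using that[OF C] False by blast
  qed
qed

lemma obtain_net_preimage:
  assumes "finite C" "C \<subseteq> f ` E" "\<And>u. u \<in> E \<Longrightarrow> \<exists>c\<in>C. dist (f u) c \<le> r"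
  obtains V where "finite V" "V \<subseteq> E" "card V = card C" "\<And>u. u \<in> E \<Longrightarrow> \<exists>v\<in>V. dist (f u) (f v) \<le> r"
proof -
  have "\<forall>c\<in>C. \<exists>u. u \<in> E \<and> f u = c" using assms(2) by blast
  then obtain pre where pre: "\<And>c. c \<in> C \<Longrightarrow> pre c \<in> E \<and> f (pre c) = c" by metis
  then have "inj_on pre C" by (intro inj_on_inverseI[where g=f]) auto
  show ?thesis
  proof (rule that[of "pre ` C"])
    show "finite (pre ` C)" "pre ` C \<subseteq> E" "card (pre ` C) = card C"
      using assms(1) pre card_image[OF \<open>inj_on pre C\<close>] by auto
    fix u assume "u \<in> E"
    then obtain c where "c \<in> C" "dist (f u) c \<le> r" using assms(3) by blast
    then show "\<exists>v\<in>pre ` C. dist (f u) (f v) \<le> r" using pre[OF \<open>c \<in> C\<close>] by (intro bexI[of _ "pre c"]) auto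
  qed
qed

section \<open>Sample means of independent random vectors\<close>

lemma (in prob_space) indep_var_of_indep_vars:
  assumes "indep_vars (\<lambda>_. borel) X I" "i \<in> I" "j \<in> I" "i \<noteq> j"
  shows "indep_var borel (X i) borel (X j)"
proof -
  have "indep_var (PiM {i} (\<lambda>_. borel)) (\<lambda>\<omega>. restrict (\<lambda>i. X i \<omega>) {i})
                  (PiM {j} (\<lambda>_. borel)) (\<lambda>\<omega>. restrict (\<lambda>i. X i \<omega>) {j})"
    using assms by (intro indep_var_restrict) auto
  then have "indep_var borel ((\<lambda>f. f i) \<circ> (\<lambda>\<omega>. restrict (\<lambda>i. X i \<omega>) {i}))
                       borel ((\<lambda>f. f j) \<circ> (\<lambda>\<omega>. restrict (\<lambda>i. X i \<omega>) {j}))"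
    by (rule indep_var_compose) (auto intro: measurable_component_singleton)
  then show ?thesis by (simp add: comp_def)
qed

lemma inner_le_half_sum_norm_sq:
  fixes a b :: "'v::real_inner"
  shows "\<bar>inner a b\<bar> \<le> ((norm a)\<^sup>2 + (norm b)\<^sup>2) / 2"
  using Cauchy_Schwarz_ineq2[of a b] sum_squares_bound[of "norm a" "norm b"]
  by (simp add: power2_eq_square field_simps)

lemma (in prob_space) integral_inner_indep_centred:
  fixes \<phi> :: "'x::topological_space \<Rightarrow> 'v::{real_inner, banach, second_countable_topology}"
  assumes ind: "indep_var borel X borel Y"
    and distr: "distr M borel X = P" "distr M borel Y = P"
    and \<phi>: "\<phi> \<in> borel_measurable borel" "integrable P \<phi>" "integral\<^sup>L P \<phi> = 0"
      "integrable P (\<lambda>x. (norm (\<phi> x))\<^sup>2)"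
  shows "integrable M (\<lambda>\<omega>. inner (\<phi> (X \<omega>)) (\<phi> (Y \<omega>)))"
    and "expectation (\<lambda>\<omega>. inner (\<phi> (X \<omega>)) (\<phi> (Y \<omega>))) = 0"
proof -
  note [measurable] = \<phi>(1) indep_var_rv1[OF ind] indep_var_rv2[OF ind]
  interpret P: prob_space P using prob_space_distr[OF indep_var_rv1[OF ind]] distr(1) by simp
  interpret PP: pair_prob_space P P ..
  have sq: "integrable M (\<lambda>\<omega>. (norm (\<phi> (Z \<omega>)))\<^sup>2)"
    if Z: "random_variable borel Z" "distr M borel Z = P" for Z
  proof -
    have "integrable (distr M borel Z) (\<lambda>x. (norm (\<phi> x))\<^sup>2)" using \<phi>(4) Z(2) by simp
    then show ?thesis using Z(1) \<phi>(1) by (simp add: integrable_distr_eq)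
  qed
  show int: "integrable M (\<lambda>\<omega>. inner (\<phi> (X \<omega>)) (\<phi> (Y \<omega>)))"
    by (rule Bochner_Integration.integrable_bound[
          where f="\<lambda>\<omega>. ((norm (\<phi> (X \<omega>)))\<^sup>2 + (norm (\<phi> (Y \<omega>)))\<^sup>2) / 2"])
       (use sq[of X] sq[of Y] distr inner_le_half_sum_norm_sq in \<open>auto intro!: AE_I2\<close>)
  define h where "h z = inner (\<phi> (fst z)) (\<phi> (snd z))" for z :: "'x \<times> 'x"
  have [measurable]: "h \<in> borel_measurable (borel \<Otimes>\<^sub>M borel)" unfolding h_def by measurable
  have joint: "distr M (borel \<Otimes>\<^sub>M borel) (\<lambda>\<omega>. (X \<omega>, Y \<omega>)) = P \<Otimes>\<^sub>M P"
    using ind unfolding indep_var_distribution_eq distr by simp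
  have "integrable (P \<Otimes>\<^sub>M P) h"
    using int unfolding joint[symmetric] by (subst integrable_distr_eq) (auto simp: h_def)
  have "expectation (\<lambda>\<omega>. inner (\<phi> (X \<omega>)) (\<phi> (Y \<omega>))) = integral\<^sup>L (P \<Otimes>\<^sub>M P) h"
    unfolding joint[symmetric] by (subst integral_distr) (auto simp: h_def)
  also have "\<dots> = (\<integral>x. (\<integral>y. h (x, y) \<partial>P) \<partial>P)"
    using PP.integral_fst'[OF \<open>integrable (P \<Otimes>\<^sub>M P) h\<close>] by simp
  also have "\<dots> = 0" using \<phi>(2,3) by (simp add: h_def)
  finally show "expectation (\<lambda>\<omega>. inner (\<phi> (X \<omega>)) (\<phi> (Y \<omega>))) = 0" .
qed

lemma (in prob_space) integral_norm_sum_indep_sq: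
  fixes \<phi> :: "'x::topological_space \<Rightarrow> 'v::{real_inner, banach, second_countable_topology}"
  assumes ind: "indep_vars (\<lambda>_. borel) X J" and "finite J"
    and distr: "\<And>i. i \<in> J \<Longrightarrow> distr M borel (X i) = P"
    and \<phi>: "\<phi> \<in> borel_measurable borel" "integrable P \<phi>" "integral\<^sup>L P \<phi> = 0"
      "integrable P (\<lambda>x. (norm (\<phi> x))\<^sup>2)"
  shows "integrable M (\<lambda>\<omega>. (norm (\<Sum>i\<in>J. \<phi> (X i \<omega>)))\<^sup>2)"
    and "expectation (\<lambda>\<omega>. (norm (\<Sum>i\<in>J. \<phi> (X i \<omega>)))\<^sup>2) = card J * integral\<^sup>L P (\<lambda>x. (norm (\<phi> x))\<^sup>2)"
proof -
  let ?V = "integral\<^sup>L P (\<lambda>x. (norm (\<phi> x))\<^sup>2)"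
  have cross: "integrable M (\<lambda>\<omega>. inner (\<phi> (X i \<omega>)) (\<phi> (X j \<omega>))) \<and>
      expectation (\<lambda>\<omega>. inner (\<phi> (X i \<omega>)) (\<phi> (X j \<omega>))) = (if i = j then ?V else 0)"
    if "i \<in> J" "j \<in> J" for i j
  proof (cases "i = j")
    case True
    have [measurable]: "X j \<in> borel_measurable M" "\<phi> \<in> borel_measurable borel"
      using ind that \<phi>(1) by (auto simp: indep_vars_def)
    have "integrable (distr M borel (X j)) (\<lambda>x. (norm (\<phi> x))\<^sup>2)"
      "integral\<^sup>L (distr M borel (X j)) (\<lambda>x. (norm (\<phi> x))\<^sup>2) = ?V"
      using \<phi>(4) distr[OF that(2)] by simp_all
    then show ?thesis
      using True by (simp add: integrable_distr_eq integral_distr power2_norm_eq_inner)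
  next
    case False
    with that show ?thesis
      using integral_inner_indep_centred[OF indep_var_of_indep_vars[OF ind] distr distr \<phi>] by simp
  qed
  have expand: "(norm (\<Sum>i\<in>J. \<phi> (X i \<omega>)))\<^sup>2 = (\<Sum>i\<in>J. \<Sum>j\<in>J. inner (\<phi> (X i \<omega>)) (\<phi> (X j \<omega>)))" for \<omega>
    by (simp add: power2_norm_eq_inner inner_sum_left inner_sum_right) (rule sum.swap)
  show "integrable M (\<lambda>\<omega>. (norm (\<Sum>i\<in>J. \<phi> (X i \<omega>)))\<^sup>2)"
    unfolding expand using cross by (intro Bochner_Integration.integrable_sum) auto
  have "expectation (\<lambda>\<omega>. (norm (\<Sum>i\<in>J. \<phi> (X i \<omega>)))\<^sup>2)
      = (\<Sum>i\<in>J. \<Sum>j\<in>J. expectation (\<lambda>\<omega>. inner (\<phi> (X i \<omega>)) (\<phi> (X j \<omega>))))"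
    unfolding expand using cross
    by (simp add: Bochner_Integration.integral_sum)
  also have "\<dots> = (\<Sum>i\<in>J. \<Sum>j\<in>J. if i = j then ?V else 0)"
    using cross by (intro sum.cong refl) auto
  also have "\<dots> = card J * ?V" using \<open>finite J\<close> by simp
  finally show "expectation (\<lambda>\<omega>. (norm (\<Sum>i\<in>J. \<phi> (X i \<omega>)))\<^sup>2) = card J * ?V" .
qed

lemma (in prob_space)
  fixes f :: "'x::topological_space \<Rightarrow> 'v::{banach, second_countable_topology}"
  assumes "random_variable borel X" "random_variable borel Y" "distr M borel X = distr M borel Y"
    and "f \<in> borel_measurable borel"
  shows integrable_comp_iff_of_distr_eq: "integrable M (\<lambda>\<omega>. f (X \<omega>)) \<longleftrightarrow> integrable M (\<lambda>\<omega>. f (Y \<omega>))"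
    and integral_comp_eq_of_distr_eq: "expectation (\<lambda>\<omega>. f (X \<omega>)) = expectation (\<lambda>\<omega>. f (Y \<omega>))"
  using assms by (simp_all add: integrable_distr_eq[symmetric] integral_distr[symmetric])

lemma (in prob_space) expectation_sample_mean:
  fixes f :: "'x::topological_space \<Rightarrow> real" and N :: nat
  assumes \<xi>: "random_variable borel \<xi>"
    and X: "\<And>i. i \<in> {1..N} \<Longrightarrow> random_variable borel (X i)"
      "\<And>i. i \<in> {1..N} \<Longrightarrow> distr M borel (X i) = distr M borel \<xi>"
    and "N \<ge> 1" and f: "f \<in> borel_measurable borel" "integrable M (\<lambda>\<omega>. f (\<xi> \<omega>))"
  shows "integrable M (\<lambda>\<omega>. (\<Sum>i=1..N. f (X i \<omega>)) / N)"
    and "expectation (\<lambda>\<omega>. (\<Sum>i=1..N. f (X i \<omega>)) / N) = expectation (\<lambda>\<omega>. f (\<xi> \<omega>))"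
proof -
  have int: "integrable M (\<lambda>\<omega>. f (X i \<omega>))" and eq: "expectation (\<lambda>\<omega>. f (X i \<omega>)) = expectation (\<lambda>\<omega>. f (\<xi> \<omega>))"
    if "i \<in> {1..N}" for i
    using integrable_comp_iff_of_distr_eq[OF X(1)[OF that] \<xi> X(2)[OF that] f(1)]
      integral_comp_eq_of_distr_eq[OF X(1)[OF that] \<xi> X(2)[OF that] f(1)] f(2) by auto
  show "integrable M (\<lambda>\<omega>. (\<Sum>i=1..N. f (X i \<omega>)) / N)"
    using int by (intro integrable_divide_zero Bochner_Integration.integrable_sum) auto
  show "expectation (\<lambda>\<omega>. (\<Sum>i=1..N. f (X i \<omega>)) / N) = expectation (\<lambda>\<omega>. f (\<xi> \<omega>))"
    using int eq \<open>N \<ge> 1\<close> by (simp add: Bochner_Integration.integral_sum)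
qed

lemma (in prob_space) sample_mean_mse:
  fixes g :: "'x::topological_space \<Rightarrow> 'v::{real_inner, banach, second_countable_topology}" and N :: nat
  assumes \<xi>: "random_variable borel \<xi>"
    and ind: "indep_vars (\<lambda>_. borel) X {1..N}"
    and distr: "\<And>i. i \<in> {1..N} \<Longrightarrow> distr M borel (X i) = distr M borel \<xi>"
    and "N \<ge> 1"
    and g: "g \<in> borel_measurable borel" "integrable M (\<lambda>\<omega>. g (\<xi> \<omega>))"
      "integrable M (\<lambda>\<omega>. (norm (g (\<xi> \<omega>) - expectation (\<lambda>\<omega>. g (\<xi> \<omega>))))\<^sup>2)"
  shows "integrable M (\<lambda>\<omega>. (norm ((1 / N) *\<^sub>R (\<Sum>i=1..N. g (X i \<omega>)) - expectation (\<lambda>\<omega>. g (\<xi> \<omega>))))\<^sup>2)"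
    and "expectation (\<lambda>\<omega>. (norm ((1 / N) *\<^sub>R (\<Sum>i=1..N. g (X i \<omega>)) - expectation (\<lambda>\<omega>. g (\<xi> \<omega>))))\<^sup>2)
      = expectation (\<lambda>\<omega>. (norm (g (\<xi> \<omega>) - expectation (\<lambda>\<omega>. g (\<xi> \<omega>))))\<^sup>2) / N"
proof -
  define \<mu> where "\<mu> = expectation (\<lambda>\<omega>. g (\<xi> \<omega>))"
  define \<phi> where "\<phi> x = g x - \<mu>" for x
  let ?P = "distr M borel \<xi>"
  note [measurable] = \<xi> g(1)
  have \<phi>_meas [measurable]: "\<phi> \<in> borel_measurable borel" unfolding \<phi>_def[abs_def] by measurable
  have "integrable ?P \<phi>" "integral\<^sup>L ?P \<phi> = 0" "integrable ?P (\<lambda>x. (norm (\<phi> x))\<^sup>2)"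
    using g(2,3) by (simp_all add: integrable_distr_eq integral_distr \<phi>_def \<mu>_def prob_space)
  note sum_sq = integral_norm_sum_indep_sq[OF ind _ distr \<phi>_meas this]
  have mean: "(1 / N) *\<^sub>R (\<Sum>i=1..N. g (X i \<omega>)) - \<mu> = (1 / N) *\<^sub>R (\<Sum>i=1..N. \<phi> (X i \<omega>))" for \<omega>
    using \<open>N \<ge> 1\<close> by (simp add: \<phi>_def sum_subtractf scaleR_diff_right sum_constant_scaleR)
  have sq: "(norm ((1 / N) *\<^sub>R (\<Sum>i=1..N. g (X i \<omega>)) - \<mu>))\<^sup>2 = (norm (\<Sum>i=1..N. \<phi> (X i \<omega>)))\<^sup>2 / N\<^sup>2" for \<omega>
    unfolding mean by (simp add: power_mult_distrib power_divide)
  show "integrable M (\<lambda>\<omega>. (norm ((1 / N) *\<^sub>R (\<Sum>i=1..N. g (X i \<omega>)) - expectation (\<lambda>\<omega>. g (\<xi> \<omega>))))\<^sup>2)"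
    using sum_sq(1) unfolding \<mu>_def[symmetric] sq by simp
  have "expectation (\<lambda>\<omega>. (norm (\<phi> (\<xi> \<omega>)))\<^sup>2) = integral\<^sup>L ?P (\<lambda>x. (norm (\<phi> x))\<^sup>2)"
    by (simp add: integral_distr)
  then show "expectation (\<lambda>\<omega>. (norm ((1 / N) *\<^sub>R (\<Sum>i=1..N. g (X i \<omega>)) - expectation (\<lambda>\<omega>. g (\<xi> \<omega>))))\<^sup>2)
      = expectation (\<lambda>\<omega>. (norm (g (\<xi> \<omega>) - expectation (\<lambda>\<omega>. g (\<xi> \<omega>))))\<^sup>2) / N"
    using sum_sq(2) unfolding \<mu>_def[symmetric] sq by (simp add: \<phi>_def power2_eq_square)
qed

lemma integral_le_of_nn_integral_exp_le:
  fixes Z :: "'a \<Rightarrow> real"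
  assumes Z: "Z \<in> borel_measurable M" "\<And>\<omega>. 0 \<le> Z \<omega>" and "c > 0"
    and exp_moment: "(\<integral>\<^sup>+\<omega>. ennreal (exp (Z \<omega> / c)) \<partial>M) \<le> ennreal (exp 1)"
  shows "integrable M Z" and "integral\<^sup>L M Z \<le> c"
proof -
  have e_le_exp: "exp 1 * y \<le> exp y" for y :: real
    using exp_ge_add_one_self[of "y - 1"] by (simp add: mult_left_mono exp_diff field_simps)
  have "(\<integral>\<^sup>+\<omega>. ennreal (exp 1) * ennreal (Z \<omega> / c) \<partial>M) \<le> (\<integral>\<^sup>+\<omega>. ennreal (exp (Z \<omega> / c)) \<partial>M)"
    using Z(2) \<open>c > 0\<close> by (intro nn_integral_mono)
      (simp add: ennreal_mult[symmetric] ennreal_leI e_le_exp[of "_ / c", unfolded times_divide_eq_right])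
  also have "\<dots> \<le> ennreal (exp 1) * 1" using exp_moment by simp
  finally have "ennreal (exp 1) * (\<integral>\<^sup>+\<omega>. ennreal (Z \<omega> / c) \<partial>M) \<le> ennreal (exp 1) * 1"
    using Z(1) by (simp add: nn_integral_cmult)
  then have bound: "(\<integral>\<^sup>+\<omega>. ennreal (Z \<omega> / c) \<partial>M) \<le> 1"
    by (subst (asm) ennreal_mult_le_mult_iff) auto
  have int: "integrable M (\<lambda>\<omega>. Z \<omega> / c)"
    using Z \<open>c > 0\<close> by (intro integrableI_nonneg) (auto simp: le_less_trans[OF bound])
  have "integral\<^sup>L M (\<lambda>\<omega>. Z \<omega> / c) = enn2real (\<integral>\<^sup>+\<omega>. ennreal (Z \<omega> / c) \<partial>M)"
    using Z \<open>c > 0\<close> by (intro integral_eq_nn_integral) auto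
  also have "\<dots> \<le> 1" using bound by (simp add: enn2real_leI)
  finally show "integral\<^sup>L M Z \<le> c" using \<open>c > 0\<close> by (simp add: field_simps)
  show "integrable M Z" using integrable_mult_right[OF int, of c] \<open>c > 0\<close> by simp
qed

lemma (in prob_space) expectation_le_sqrt_second_moment:
  fixes Q :: "'a \<Rightarrow> real"
  assumes "integrable M Q" "integrable M (\<lambda>\<omega>. (Q \<omega>)\<^sup>2)"
  shows "expectation Q \<le> sqrt (expectation (\<lambda>\<omega>. (Q \<omega>)\<^sup>2))"
  using variance_positive[of Q] variance_eq[OF assms] by (intro real_le_rsqrt) simp

lemma (in prob_space) norm_expectation_diff_le:
  fixes f g :: "'a \<Rightarrow> 'v::{banach, second_countable_topology}"
  assumes "integrable M f" "integrable M g" "integrable M L" "\<And>\<omega>. norm (f \<omega> - g \<omega>) \<le> L \<omega> * d"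
  shows "norm (expectation f - expectation g) \<le> expectation L * d"
proof -
  have "norm (expectation f - expectation g) \<le> expectation (\<lambda>\<omega>. norm (f \<omega> - g \<omega>))"
    using assms(1,2) by (simp flip: Bochner_Integration.integral_diff)
  also have "\<dots> \<le> expectation (\<lambda>\<omega>. L \<omega> * d)" using assms by (intro integral_mono) auto
  finally show ?thesis by simp
qed

lemma (in prob_space) expectation_sample_mean_error_on_finite_set:
  fixes G :: "'x::topological_space \<Rightarrow> 'u \<Rightarrow> 'v::{real_inner, banach, second_countable_topology}"
    and N :: nat and \<sigma> :: real
  assumes \<xi>: "random_variable borel \<xi>"
    and ind: "indep_vars (\<lambda>_. borel) X {1..N}"
    and distr: "\<And>i. i \<in> {1..N} \<Longrightarrow> distr M borel (X i) = distr M borel \<xi>"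
    and "N \<ge> 1" and "finite V"
    and G: "\<And>u. u \<in> V \<Longrightarrow> (\<lambda>x. G x u) \<in> borel_measurable borel"
      "\<And>u. u \<in> V \<Longrightarrow> integrable M (\<lambda>\<omega>. G (\<xi> \<omega>) u)"
      "\<And>u. u \<in> V \<Longrightarrow> integrable M (\<lambda>\<omega>. (norm (G (\<xi> \<omega>) u - expectation (\<lambda>\<omega>'. G (\<xi> \<omega>') u)))\<^sup>2)"
      "\<And>u. u \<in> V \<Longrightarrow> expectation (\<lambda>\<omega>. (norm (G (\<xi> \<omega>) u - expectation (\<lambda>\<omega>'. G (\<xi> \<omega>') u)))\<^sup>2) \<le> \<sigma>\<^sup>2"
  defines "Q \<equiv> \<lambda>\<omega>. sqrt (\<Sum>u\<in>V. (norm ((1 / N) *\<^sub>R (\<Sum>i=1..N. G (X i \<omega>) u) - expectation (\<lambda>\<omega>'. G (\<xi> \<omega>') u)))\<^sup>2)"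
  shows "integrable M Q" and "expectation Q \<le> sqrt (card V * \<sigma>\<^sup>2 / N)"
proof -
  define S where "S u \<omega> = (norm ((1 / N) *\<^sub>R (\<Sum>i=1..N. G (X i \<omega>) u) - expectation (\<lambda>\<omega>'. G (\<xi> \<omega>') u)))\<^sup>2"
    for u \<omega>
  have S: "integrable M (S u)" "expectation (S u) \<le> \<sigma>\<^sup>2 / N" if "u \<in> V" for u
    using sample_mean_mse[OF \<xi> ind distr \<open>N \<ge> 1\<close> G(1-3)[OF that]] G(4)[OF that] \<open>N \<ge> 1\<close>
    by (simp_all add: S_def[abs_def] divide_right_mono)
  have Q_eq: "Q = (\<lambda>\<omega>. sqrt (\<Sum>u\<in>V. S u \<omega>))" by (simp add: Q_def S_def)
  have Q_sq: "(Q \<omega>)\<^sup>2 = (\<Sum>u\<in>V. S u \<omega>)" for \<omega>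
    by (simp add: Q_eq S_def sum_nonneg)
  have sq_int: "integrable M (\<lambda>\<omega>. (Q \<omega>)\<^sup>2)" unfolding Q_sq using S by auto
  show int: "integrable M Q"
  proof (rule square_integrable_imp_integrable[OF _ sq_int])
    show "Q \<in> borel_measurable M" unfolding Q_eq
      by (intro measurable_compose[OF _ borel_measurable_sqrt] borel_measurable_sum)
        (use S(1) in \<open>auto intro: borel_measurable_integrable\<close>)
  qed
  have "expectation (\<lambda>\<omega>. (Q \<omega>)\<^sup>2) = (\<Sum>u\<in>V. expectation (S u))"
    unfolding Q_sq using S by (simp add: Bochner_Integration.integral_sum)
  also have "\<dots> \<le> card V * \<sigma>\<^sup>2 / N" using S sum_mono[of V _ "\<lambda>_. \<sigma>\<^sup>2 / N"] by simp
  finally show "expectation Q \<le> sqrt (card V * \<sigma>\<^sup>2 / N)"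
    using expectation_le_sqrt_second_moment[OF int sq_int] real_sqrt_le_mono order_trans by blast
qed

lemma norm_diff_le_via_nearby_point:
  fixes m a :: "'u \<Rightarrow> 'v::real_normed_vector"
  assumes "norm (m u - m v) \<le> Lm * d" "norm (a v - a u) \<le> La * d" "d \<le> r" "0 \<le> Lm" "0 \<le> La"
  shows "norm (m u - a u) \<le> norm (m v - a v) + (Lm + La) * r"
proof -
  have "norm (m u - a u) \<le> norm (m u - m v) + norm (m v - a v) + norm (a v - a u)"
    using norm_triangle_ineq[of "m u - m v" "m v - a v"]
      norm_triangle_ineq[of "m u - m v + (m v - a v)" "a v - a u"] by simp
  moreover have "Lm * d \<le> Lm * r" "La * d \<le> La * r" using assms(3-5) by (auto intro: mult_left_mono)
  ultimately show ?thesis using assms(1,2) by (simp add: algebra_simps)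
qed

lemma (in prob_space) sample_mean_uniform_deviation:
  fixes G :: "'x::topological_space \<Rightarrow> 'u \<Rightarrow> 'v::{real_inner, banach, second_countable_topology}"
    and B :: "'u \<Rightarrow> 'w::metric_space" and N :: nat and \<sigma> r :: real
  assumes \<xi>: "random_variable borel \<xi>"
    and ind: "indep_vars (\<lambda>_. borel) X {1..N}"
    and distr: "\<And>i. i \<in> {1..N} \<Longrightarrow> distr M borel (X i) = distr M borel \<xi>"
    and "N \<ge> 1"
    and G: "\<And>u. u \<in> E \<Longrightarrow> (\<lambda>x. G x u) \<in> borel_measurable borel"
      "\<And>u. u \<in> E \<Longrightarrow> integrable M (\<lambda>\<omega>. G (\<xi> \<omega>) u)"
      "\<And>u. u \<in> E \<Longrightarrow> integrable M (\<lambda>\<omega>. (norm (G (\<xi> \<omega>) u - expectation (\<lambda>\<omega>'. G (\<xi> \<omega>') u)))\<^sup>2)"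
      "\<And>u. u \<in> E \<Longrightarrow> expectation (\<lambda>\<omega>. (norm (G (\<xi> \<omega>) u - expectation (\<lambda>\<omega>'. G (\<xi> \<omega>') u)))\<^sup>2) \<le> \<sigma>\<^sup>2"
    and L: "L \<in> borel_measurable borel" "\<And>x. 0 \<le> L x" "integrable M (\<lambda>\<omega>. L (\<xi> \<omega>))"
    and G_lip: "\<And>x u v. u \<in> E \<Longrightarrow> v \<in> E \<Longrightarrow> dist (G x u) (G x v) \<le> L x * dist (B u) (B v)"
    and net: "finite V" "V \<subseteq> E" "\<And>u. u \<in> E \<Longrightarrow> \<exists>v\<in>V. dist (B u) (B v) \<le> r"
  obtains h where "integrable M h"
    "\<And>\<omega> u. u \<in> E \<Longrightarrow> norm (expectation (\<lambda>\<omega>'. G (\<xi> \<omega>') u) - (1 / N) *\<^sub>R (\<Sum>i=1..N. G (X i \<omega>) u)) \<le> h \<omega>"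
    "expectation h \<le> sqrt (card V * \<sigma>\<^sup>2 / N) + 2 * expectation (\<lambda>\<omega>. L (\<xi> \<omega>)) * r"
proof -
  define m where "m u = expectation (\<lambda>\<omega>. G (\<xi> \<omega>) u)" for u
  define mean where "mean \<omega> u = (1 / N) *\<^sub>R (\<Sum>i=1..N. G (X i \<omega>) u)" for \<omega> u
  define EL where "EL = expectation (\<lambda>\<omega>. L (\<xi> \<omega>))"
  define Lmean where "Lmean \<omega> = (\<Sum>i=1..N. L (X i \<omega>)) / N" for \<omega>
  define Q where "Q \<omega> = sqrt (\<Sum>u\<in>V. (norm (mean \<omega> u - m u))\<^sup>2)" for \<omega>
  have Q: "integrable M Q" "expectation Q \<le> sqrt (card V * \<sigma>\<^sup>2 / N)"
    unfolding Q_def[abs_def] mean_def m_def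
    by (rule expectation_sample_mean_error_on_finite_set[OF \<xi> ind distr \<open>N \<ge> 1\<close> net(1)];
        use G net(2) in blast)+
  have X_rv: "\<And>i. i \<in> {1..N} \<Longrightarrow> random_variable borel (X i)"
    using ind by (simp add: indep_vars_def)
  note Lmean = expectation_sample_mean[where X=X, OF \<xi> X_rv distr \<open>N \<ge> 1\<close> L(1,3), folded Lmean_def[abs_def]]
  have "Lmean \<omega> \<ge> 0" for \<omega> using L(2) by (simp add: Lmean_def sum_nonneg)
  have m_lip: "norm (m u - m v) \<le> EL * dist (B u) (B v)" if "u \<in> E" "v \<in> E" for u v
    unfolding m_def EL_def using G(2) that L(3) G_lip[OF that]
    by (intro norm_expectation_diff_le) (auto simp: dist_norm)
  have mean_lip: "norm (mean \<omega> u - mean \<omega> v) \<le> Lmean \<omega> * dist (B u) (B v)" if "u \<in> E" "v \<in> E" for \<omega> u v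
  proof -
    have "norm (mean \<omega> u - mean \<omega> v) = norm (\<Sum>i=1..N. G (X i \<omega>) u - G (X i \<omega>) v) / N"
      by (simp add: mean_def sum_subtractf flip: scaleR_diff_right)
    also have "\<dots> \<le> (\<Sum>i=1..N. L (X i \<omega>) * dist (B u) (B v)) / N"
      using G_lip[OF that] by (intro divide_right_mono order_trans[OF norm_sum sum_mono]) (auto simp: dist_norm)
    finally show ?thesis by (simp add: Lmean_def sum_distrib_right)
  qed
  define h where "h \<omega> = Q \<omega> + (EL + Lmean \<omega>) * r" for \<omega>
  show ?thesis
  proof
    show "integrable M h" using Q(1) Lmean(1) by (simp add: h_def[abs_def])
    show "expectation h \<le> sqrt (card V * \<sigma>\<^sup>2 / N) + 2 * expectation (\<lambda>\<omega>. L (\<xi> \<omega>)) * r"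
      using Q Lmean by (simp add: h_def[abs_def] EL_def prob_space algebra_simps)
    fix \<omega> u assume "u \<in> E"
    then obtain v where "v \<in> V" and v: "dist (B u) (B v) \<le> r" using net(3) by blast
    then have "v \<in> E" using net(2) by blast
    have "(norm (mean \<omega> v - m v))\<^sup>2 \<le> (\<Sum>u\<in>V. (norm (mean \<omega> u - m u))\<^sup>2)"
      using \<open>v \<in> V\<close> net(1) by (intro member_le_sum) auto
    then have "norm (m v - mean \<omega> v) \<le> Q \<omega>"
      unfolding Q_def by (subst norm_minus_commute) (rule real_le_rsqrt)
    moreover have "norm (m u - mean \<omega> u) \<le> norm (m v - mean \<omega> v) + (EL + Lmean \<omega>) * r"
      using m_lip[OF \<open>u \<in> E\<close> \<open>v \<in> E\<close>] mean_lip[OF \<open>v \<in> E\<close> \<open>u \<in> E\<close>, of \<omega>] v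
        \<open>Lmean \<omega> \<ge> 0\<close> L(2) by (intro norm_diff_le_via_nearby_point) (auto simp: EL_def dist_commute)
    ultimately have "norm (m u - mean \<omega> u) \<le> h \<omega>" by (simp add: h_def)
    then show "norm (expectation (\<lambda>\<omega>'. G (\<xi> \<omega>') u) - (1 / N) *\<^sub>R (\<Sum>i=1..N. G (X i \<omega>) u)) \<le> h \<omega>"
      by (simp add: m_def mean_def)
  qed
qed

lemma sample_size_arith:
  fixes D EL ELs \<tau> \<epsilon> r :: real and K N :: nat
  assumes "0 \<le> D" "0 \<le> ELs" "ELs \<le> EL" "\<epsilon> > 0" "N \<ge> 1"
    and r: "D * EL > 0 \<Longrightarrow> r = \<epsilon> / (4 * D * EL)"
    and N: "real N \<ge> 12 * D\<^sup>2 * \<tau>\<^sup>2 / \<epsilon>\<^sup>2 * real K"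
  shows "D * (sqrt (K * \<tau>\<^sup>2 / N) + 2 * ELs * r) \<le> \<epsilon>"
proof -
  have "12 * (real K * (D\<^sup>2 * \<tau>\<^sup>2)) \<le> real N * \<epsilon>\<^sup>2"
    using mult_right_mono[OF N, of "\<epsilon>\<^sup>2"] \<open>\<epsilon> > 0\<close> by (simp add: field_simps)
  moreover have "0 \<le> real K * (D\<^sup>2 * \<tau>\<^sup>2)" by simp
  ultimately have "4 * (real K * (D\<^sup>2 * \<tau>\<^sup>2)) \<le> real N * \<epsilon>\<^sup>2" by linarith
  then have "D\<^sup>2 * (K * \<tau>\<^sup>2 / N) \<le> (\<epsilon> / 2)\<^sup>2" using \<open>N \<ge> 1\<close> by (simp add: field_simps)
  then have "sqrt (D\<^sup>2 * (K * \<tau>\<^sup>2 / N)) \<le> \<epsilon> / 2"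
    using \<open>\<epsilon> > 0\<close> real_sqrt_le_mono by fastforce
  moreover have "sqrt (D\<^sup>2 * (K * \<tau>\<^sup>2 / N)) = D * sqrt (K * \<tau>\<^sup>2 / N)"
    using \<open>0 \<le> D\<close> by (simp only: real_sqrt_mult real_sqrt_abs abs_of_nonneg)
  ultimately have "D * sqrt (K * \<tau>\<^sup>2 / N) \<le> \<epsilon> / 2" by simp
  moreover have "D * (2 * ELs * r) \<le> \<epsilon> / 2"
  proof (cases "D * EL > 0")
    case True
    then have "D \<noteq> 0" "EL > 0" using assms(1) by (auto simp: zero_less_mult_iff)
    then have "D * (2 * ELs * r) = ELs / EL * (\<epsilon> / 2)" using True by (simp add: r field_simps)
    also have "\<dots> \<le> \<epsilon> / 2"
      using \<open>EL > 0\<close> assms(2-4) by (intro mult_left_le_one_le) (auto simp: divide_le_eq_1)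
    finally show ?thesis .
  next
    case False
    then have "D = 0 \<or> ELs = 0" using assms(1-3) by (auto simp: zero_less_mult_iff)
    then show ?thesis using \<open>\<epsilon> > 0\<close> by auto
  qed
  ultimately show ?thesis by (simp add: distrib_left)
qed

lemma (in prob_space) sample_gradient_uniform_error:
  fixes G :: "'x::topological_space \<Rightarrow> 'u::{real_normed_vector, second_countable_topology} \<Rightarrow> 'v::{real_inner, banach, second_countable_topology}"
    and B :: "'u \<Rightarrow> 'w::real_normed_vector" and N :: nat and \<tau> \<epsilon> :: real
  assumes \<xi>: "random_variable borel \<xi>"
    and ind: "indep_vars (\<lambda>_. borel) X {1..N}"
    and distr: "\<And>i. i \<in> {1..N} \<Longrightarrow> distr M borel (X i) = distr M borel \<xi>"
    and "N \<ge> 1"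
    and B: "compact_operator B" and E: "bounded E" "E \<noteq> {}"
    and G_cont: "\<And>x. continuous_on E (G x)"
    and G_meas: "\<And>u. u \<in> E \<Longrightarrow> (\<lambda>x. G x u) \<in> borel_measurable borel"
    and G_int: "\<And>u. u \<in> E \<Longrightarrow> integrable M (\<lambda>\<omega>. G (\<xi> \<omega>) u)"
    and "\<tau> > 0"
    and subgauss: "\<And>u. u \<in> E \<Longrightarrow>
      (\<integral>\<^sup>+\<omega>. ennreal (exp ((norm (G (\<xi> \<omega>) u - expectation (\<lambda>\<omega>'. G (\<xi> \<omega>') u)))\<^sup>2 / \<tau>\<^sup>2)) \<partial>M) \<le> ennreal (exp 1)"
    and L: "\<And>x. 0 \<le> L x" "integrable M (\<lambda>\<omega>. L (\<xi> \<omega>))"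
    and G_lip: "\<And>x u v. u \<in> E \<Longrightarrow> v \<in> E \<Longrightarrow> dist (G x u) (G x v) \<le> L x * dist (B u) (B v)"
    and "\<epsilon> > 0"
    and N_large: "real N \<ge> 12 * (diameter E)\<^sup>2 * \<tau>\<^sup>2 / \<epsilon>\<^sup>2 * real (covering_number
        (ereal \<epsilon> / ereal (4 * diameter E * expectation (\<lambda>\<omega>. L (\<xi> \<omega>)))) (B ` E))"
  obtains h where "integrable M h"
    "\<And>\<omega> u. u \<in> E \<Longrightarrow> norm (expectation (\<lambda>\<omega>'. G (\<xi> \<omega>') u) - (1 / N) *\<^sub>R (\<Sum>i=1..N. G (X i \<omega>) u)) \<le> h \<omega>"
    "diameter E * expectation h \<le> \<epsilon>"
proof -
  let ?D = "diameter E" and ?EL = "expectation (\<lambda>\<omega>. L (\<xi> \<omega>))"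
  have B_cont: "continuous_on E B"
    using B by (intro linear_continuous_on) (simp add: compact_operator_def)
  \<comment> \<open>L need not be measurable, so pass to a measurable Lipschitz bound below it\<close>
  obtain Ls where Ls: "Ls \<in> borel_measurable borel" "\<And>x. 0 \<le> Ls x" "\<And>x. Ls x \<le> L x"
    and Ls_lip: "\<And>x u v. u \<in> E \<Longrightarrow> v \<in> E \<Longrightarrow> dist (G x u) (G x v) \<le> Ls x * dist (B u) (B v)"
    using obtain_measurable_lipschitz_bound[OF G_cont B_cont G_meas L(1) G_lip] by blast
  have Ls_int: "integrable M (\<lambda>\<omega>. Ls (\<xi> \<omega>))"
    using Ls L by (intro Bochner_Integration.integrable_bound[OF L(2)] measurable_compose[OF \<xi>]) auto
  have ELs: "0 \<le> expectation (\<lambda>\<omega>. Ls (\<xi> \<omega>))" "expectation (\<lambda>\<omega>. Ls (\<xi> \<omega>)) \<le> ?EL"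
    using Ls Ls_int L by (auto intro: integral_nonneg_AE integral_mono)
  have var: "integrable M (\<lambda>\<omega>. (norm (G (\<xi> \<omega>) u - expectation (\<lambda>\<omega>'. G (\<xi> \<omega>') u)))\<^sup>2)"
    "expectation (\<lambda>\<omega>. (norm (G (\<xi> \<omega>) u - expectation (\<lambda>\<omega>'. G (\<xi> \<omega>') u)))\<^sup>2) \<le> \<tau>\<^sup>2" if "u \<in> E" for u
    using integral_le_of_nn_integral_exp_le[OF _ _ _ subgauss[OF that]] G_meas[OF that] \<xi> \<open>\<tau> > 0\<close> by auto
  obtain T where T: "compact T" "B ` E \<subseteq> T" by (rule compact_operator_image_subset_compact[OF B E(1)])
  have "?D \<ge> 0" "?EL \<ge> 0" using E(1) L(1) by (auto intro: diameter_ge_0 integral_nonneg_AE)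
  then have "B ` E \<noteq> {}" "4 * ?D * ?EL \<ge> 0" using E(2) by auto
  then obtain C r where C: "finite C" "C \<subseteq> B ` E" "card C = covering_number (ereal \<epsilon> / ereal (4 * ?D * ?EL)) (B ` E)"
    and net: "\<And>s. s \<in> B ` E \<Longrightarrow> \<exists>c\<in>C. dist s c \<le> r" and r: "4 * ?D * ?EL > 0 \<Longrightarrow> r = \<epsilon> / (4 * ?D * ?EL)"
    using obtain_minimal_net_radius[OF T _ \<open>\<epsilon> > 0\<close>] by blast
  have "\<exists>c\<in>C. dist (B u) c \<le> r" if "u \<in> E" for u using net that by blast
  then obtain V where V: "finite V" "V \<subseteq> E" "card V = card C" "\<And>u. u \<in> E \<Longrightarrow> \<exists>v\<in>V. dist (B u) (B v) \<le> r"
    using obtain_net_preimage[OF C(1,2)] by blast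
  obtain h where h: "integrable M h"
    "\<And>\<omega> u. u \<in> E \<Longrightarrow> norm (expectation (\<lambda>\<omega>'. G (\<xi> \<omega>') u) - (1 / N) *\<^sub>R (\<Sum>i=1..N. G (X i \<omega>) u)) \<le> h \<omega>"
    "expectation h \<le> sqrt (card V * \<tau>\<^sup>2 / N) + 2 * expectation (\<lambda>\<omega>. Ls (\<xi> \<omega>)) * r"
    using sample_mean_uniform_deviation[OF \<xi> ind distr \<open>N \<ge> 1\<close> G_meas G_int var Ls(1,2) Ls_int Ls_lip V(1,2,4)]
    by blast
  have "?D * expectation h \<le> \<epsilon>"
    using mult_left_mono[OF h(3) \<open>?D \<ge> 0\<close>] r
      sample_size_arith[OF \<open>?D \<ge> 0\<close> ELs \<open>\<epsilon> > 0\<close> \<open>N \<ge> 1\<close> _ N_large[folded C(3), folded V(3)], of r]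
    by (simp add: mult.assoc)
  with h(1,2) show ?thesis using that by blast
qed

section \<open>The expected gap\<close>

lemma integral_le_integral_add_of_dist_le:
  fixes f g k :: "'a \<Rightarrow> real"
  assumes "g \<in> borel_measurable M" "\<And>\<omega>. 0 \<le> g \<omega>"
    and "\<And>\<omega>. \<bar>f \<omega> - g \<omega>\<bar> \<le> k \<omega>" "integrable M k"
  shows "integral\<^sup>L M f \<le> integral\<^sup>L M g + integral\<^sup>L M k"
proof (cases "integrable M f")
  case True
  have g_bound: "norm (g \<omega>) \<le> norm (\<bar>f \<omega>\<bar> + k \<omega>)" for \<omega>
    using assms(2,3)[of \<omega>] by (smt (verit) real_norm_def)
  have "integrable M g"
    by (rule Bochner_Integration.integrable_bound[of _ "\<lambda>\<omega>. \<bar>f \<omega>\<bar> + k \<omega>"])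
       (use True assms(1,4) g_bound in auto)
  moreover have "f \<omega> \<le> g \<omega> + k \<omega>" for \<omega> using abs_le_D1[OF assms(3)[of \<omega>]] by simp
  ultimately have "integral\<^sup>L M f \<le> integral\<^sup>L M (\<lambda>\<omega>. g \<omega> + k \<omega>)"
    using True assms(4) by (intro integral_mono) auto
  then show ?thesis using \<open>integrable M g\<close> assms(4) by simp
next
  case False
  have "0 \<le> k \<omega>" for \<omega> using assms(3)[of \<omega>] by linarith
  then show ?thesis
    using assms(2) not_integrable_integral_eq[OF False] by (simp add: integral_nonneg_AE)
qed

lemma (in prob_space) expectation_gap_le:
  fixes \<psi> :: "'u::{real_inner, second_countable_topology} \<Rightarrow> ereal"
  assumes \<psi>: "proper_closed_convex \<psi>" "bounded (edom \<psi>)" "\<And>u. \<psi> u \<ge> 0"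
    and u: "u \<in> borel_measurable M" "\<And>\<omega>. u \<omega> \<in> edom \<psi>"
    and H: "(\<lambda>\<omega>. adj B (H \<omega>)) \<in> borel_measurable M"
    and h: "integrable M h" "\<And>\<omega>. norm (adj B (G \<omega>) - adj B (H \<omega>)) \<le> h \<omega>"
  shows "expectation (\<lambda>\<omega>. gap \<psi> B (G \<omega>) (u \<omega>))
    \<le> expectation (\<lambda>\<omega>. gap \<psi> B (H \<omega>) (u \<omega>)) + diameter (edom \<psi>) * expectation h"
proof -
  have "\<bar>gap \<psi> B (G \<omega>) (u \<omega>) - gap \<psi> B (H \<omega>) (u \<omega>)\<bar> \<le> diameter (edom \<psi>) * h \<omega>" for \<omega>
    using abs_gap_diff_le[OF \<psi>(2,3) u(2)] mult_left_mono[OF h(2) diameter_ge_0[OF \<psi>(2)]]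
    by (blast intro: order_trans)
  then have "expectation (\<lambda>\<omega>. gap \<psi> B (G \<omega>) (u \<omega>))
      \<le> expectation (\<lambda>\<omega>. gap \<psi> B (H \<omega>) (u \<omega>)) + expectation (\<lambda>\<omega>. diameter (edom \<psi>) * h \<omega>)"
    by (rule integral_le_integral_add_of_dist_le[OF borel_measurable_gap[OF \<psi> H u(1)] gap_nonneg[OF \<psi>(2,3) u(2)]])
      (use h(1) in simp)
  then show ?thesis by simp
qed

theorem corollary3p9:
  fixes M :: "'a measure"
    and \<psi> :: "'u::{real_inner, banach, second_countable_topology} \<Rightarrow> ereal"
    and B :: "'u \<Rightarrow> 'w::{banach, second_countable_topology}"
    and U0 :: "'u set"
    and \<xi> :: "'a \<Rightarrow> 'x::polish_space"
    and Xs :: "nat \<Rightarrow> 'a \<Rightarrow> 'x"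
    and f :: "'w \<Rightarrow> 'x \<Rightarrow> real"
    and \<zeta>f \<zeta>Df LDf :: "'x \<Rightarrow> real"
    and gradg :: "'x \<Rightarrow> 'u \<Rightarrow> 'u"
    and Dwf :: "'w \<Rightarrow> 'x \<Rightarrow> ('w \<Rightarrow>\<^sub>L real)"
    and \<tau> \<epsilon> :: real
    and N :: nat
    and uN :: "'a \<Rightarrow> 'u"
  assumes prob: "prob_space M" and compl: "complete_measure M"
    and \<xi>_rv: "\<xi> \<in> M \<rightarrow>\<^sub>M borel"
    and Xs_rv: "\<And>i. i \<ge> 1 \<Longrightarrow> Xs i \<in> M \<rightarrow>\<^sub>M borel"
    and Xs_indep: "prob_space.indep_vars M (\<lambda>_. borel) Xs {1..}"
    and Xs_distr: "\<And>i. i \<ge> 1 \<Longrightarrow> distr M borel (Xs i) = distr M borel \<xi>"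
    and B_comp: "compact_operator B"
    and \<psi>_pcc: "proper_closed_convex \<psi>"
    and \<psi>_nonneg: "\<And>u. \<psi> u \<ge> 0"
    and dom_bdd: "bounded (edom \<psi>)"
    and U0: "open U0" "convex U0" "bounded U0" "edom \<psi> \<subseteq> U0"
    and f_cont: "\<And>x. continuous_on (B ` edom \<psi>) (\<lambda>w. f w x)"
    and f_meas: "\<And>w. w \<in> B ` U0 \<Longrightarrow> (\<lambda>x. f w x) \<in> borel_measurable borel"
    and f_bound: "\<And>u x. u \<in> U0 \<Longrightarrow> \<bar>f (B u) x\<bar> \<le> \<zeta>f x"
    and \<zeta>f_int: "integrable M (\<lambda>\<omega>. \<zeta>f (\<xi> \<omega>))"
    and g_deriv: "\<And>x u. u \<in> U0 \<Longrightarrow>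
        ((\<lambda>v. f (B v) x) has_derivative (\<lambda>h. inner (gradg x u) h)) (at u)"
    and g_C1: "\<And>x. continuous_on U0 (gradg x)"
    and Dwf_cont: "\<And>x. continuous_on (B ` edom \<psi>) (\<lambda>w. Dwf w x)"
    and Dwf_meas: "\<And>w. w \<in> B ` edom \<psi> \<Longrightarrow> (\<lambda>x. Dwf w x) \<in> borel_measurable borel"
    and grad_repr: "\<And>x u. u \<in> edom \<psi> \<Longrightarrow> gradg x u = adj B (Dwf (B u) x)"
    and grad_bound: "\<And>x u. u \<in> U0 \<Longrightarrow> norm (gradg x u) \<le> \<zeta>Df x"
    and Dwf_bound: "\<And>x u. u \<in> edom \<psi> \<Longrightarrow> norm (Dwf (B u) x) \<le> \<zeta>Df x"
    and \<zeta>Df_int: "integrable M (\<lambda>\<omega>. \<zeta>Df (\<xi> \<omega>))"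
    and LDf_nonneg: "\<And>x. LDf x \<ge> 0"
    and LDf_int: "integrable M (\<lambda>\<omega>. LDf (\<xi> \<omega>))"
    and grad_Lip: "\<And>x u1 u2. u1 \<in> edom \<psi> \<Longrightarrow> u2 \<in> edom \<psi> \<Longrightarrow>
        norm (gradg x u2 - gradg x u1) \<le> LDf x * norm (B u2 - B u1)"
    and \<tau>_pos: "\<tau> > 0"
    and subgauss: "\<And>u. u \<in> edom \<psi> \<Longrightarrow>
        (\<integral>\<^sup>+ \<omega>. ennreal (exp ((norm (gradg (\<xi> \<omega>) u
              - integral\<^sup>L M (\<lambda>\<omega>'. gradg (\<xi> \<omega>') u)))\<^sup>2 / \<tau>\<^sup>2)) \<partial>M) \<le> ennreal (exp 1)"
    and N_pos: "N \<ge> 1"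
    and uN_meas: "uN \<in> borel_measurable M"
    and uN_dom: "\<And>\<omega>. uN \<omega> \<in> edom \<psi>"
    and \<epsilon>_pos: "\<epsilon> > 0"
    and N_large: "real N \<ge> 12 * (diameter (edom \<psi>))\<^sup>2 * \<tau>\<^sup>2 / \<epsilon>\<^sup>2
        * real (covering_number
             (ereal \<epsilon> / ereal (4 * diameter (edom \<psi>) * integral\<^sup>L M (\<lambda>\<omega>. LDf (\<xi> \<omega>))))
             (B ` edom \<psi>))"
  shows "integral\<^sup>L M (\<lambda>\<omega>. gap \<psi> B (DF M \<xi> Dwf (B (uN \<omega>))) (uN \<omega>))
         \<le> integral\<^sup>L M (\<lambda>\<omega>. gap \<psi> B (DFhat Xs Dwf N \<omega> (B (uN \<omega>))) (uN \<omega>)) + \<epsilon>"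
proof -
  interpret prob_space M by (rule prob)
  let ?E = "edom \<psi>" and ?D = "diameter (edom \<psi>)"
  have B: "bounded_linear B" using B_comp by (simp add: compact_operator_def)
  have grad: "(\<lambda>x. gradg x u) \<in> borel_measurable borel" "integrable M (\<lambda>\<omega>. gradg (\<xi> \<omega>) u)"
    "adj B (DF M \<xi> Dwf (B u)) = expectation (\<lambda>\<omega>. gradg (\<xi> \<omega>) u)" if u: "u \<in> ?E" for u
    using adj_DF[where Dwf=Dwf and w="B u", OF B \<xi>_rv Dwf_meas Dwf_bound[OF u] \<zeta>Df_int] u
    by (simp_all add: grad_repr)
  have grad_cont: "continuous_on ?E (gradg x)" for x by (rule continuous_on_subset[OF g_C1 U0(4)])
  have adj_DFhat_eq: "adj B (DFhat Xs Dwf N \<omega> (B (uN \<omega>))) = (1 / N) *\<^sub>R (\<Sum>i=1..N. gradg (Xs i \<omega>) (uN \<omega>))" for \<omega>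
    by (simp add: adj_DFhat[OF B] grad_repr[OF uN_dom])
  have "?E \<noteq> {}" using \<psi>_pcc by (simp add: proper_closed_convex_def)
  have grad_lip: "dist (gradg x u) (gradg x v) \<le> LDf x * dist (B u) (B v)" if "u \<in> ?E" "v \<in> ?E" for x u v
    using grad_Lip[OF that(2,1)] by (simp add: dist_norm)
  have Xs: "indep_vars (\<lambda>_. borel) Xs {1..N}" "\<And>i. i \<in> {1..N} \<Longrightarrow> distr M borel (Xs i) = distr M borel \<xi>"
    using indep_vars_subset[OF Xs_indep] Xs_distr by auto
  obtain h where h: "integrable M h"
    "\<And>\<omega> u. u \<in> ?E \<Longrightarrow> norm (expectation (\<lambda>\<omega>'. gradg (\<xi> \<omega>') u) - (1 / N) *\<^sub>R (\<Sum>i=1..N. gradg (Xs i \<omega>) u)) \<le> h \<omega>"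
    "?D * expectation h \<le> \<epsilon>"
    using sample_gradient_uniform_error[OF \<xi>_rv Xs N_pos B_comp dom_bdd \<open>?E \<noteq> {}\<close> grad_cont grad(1,2)
        \<tau>_pos subgauss LDf_nonneg LDf_int grad_lip \<epsilon>_pos N_large] by blast
  have "(\<lambda>\<omega>. adj B (DFhat Xs Dwf N \<omega> (B (uN \<omega>)))) \<in> borel_measurable M"
    unfolding adj_DFhat_eq using Xs_rv
    by (intro borel_measurable_scaleR borel_measurable_const borel_measurable_sum
        borel_measurable_caratheodory[OF grad_cont grad(1) _ uN_meas uN_dom]) auto
  moreover have "norm (adj B (DF M \<xi> Dwf (B (uN \<omega>))) - adj B (DFhat Xs Dwf N \<omega> (B (uN \<omega>)))) \<le> h \<omega>" for \<omega>
    using h(2)[OF uN_dom] by (simp add: grad(3)[OF uN_dom] adj_DFhat_eq)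
  ultimately show ?thesis
    using expectation_gap_le[OF \<psi>_pcc dom_bdd \<psi>_nonneg uN_meas uN_dom _ h(1)] h(3) by fastforce
qed

end
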